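(* On $\ell^2(\mathbb{Z}^2)$ let $h_0$ be the discrete Laplacian $(h_0u)(n)=\sum_{m\in\mathbb{Z}^2:|m-n|=1}u(m)$, let $C_0=\{0,1\}\times\{0,1\}$, and for real $a,b$ let $h_{a,b}=h_0+V_{a,b}$, where $V_{a,b}$ is multiplication by $$V_{a,b}(j)=a\,\chi_{C_0}(j_1,j_2-2)+b\,\chi_{C_0}(j_1+2,j_2),\qquad j=(j_1,j_2)\in\mathbb{Z}^2.$$ If $a\neq b$, then there is $R>0$ such that for all $z\in\mathbb{C}\setminus\mathbb{R}$ with $|z|>R$, the operator $\chi_{C_0}(h_{a,b}-z)^{-1}\chi_{C_0}$, viewed as an operator on the $4$-dimensional space $\ell^2(C_0)$, has four distinct (hence simple) eigenvalues.
   Context: $\chi_{C_0}$ denotes multiplication by the indicator function of $C_0$. Thus $V_{a,b}$ equals $a$ on the square $\{0,1\}\times\{2,3\}$, $b$ on the square $\{-2,-1\}\times\{0,1\}$, and $0$ elsewhere. *)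

theory Defs
  imports "HOL-Analysis.Analysis"
begin

type_synonym site = "int \<times> int"

definition ell2 :: "(site \<Rightarrow> complex) \<Rightarrow> bool" where
  "ell2 u \<longleftrightarrow> (\<lambda>n. (norm (u n))\<^sup>2) summable_on UNIV"

definition h0 :: "(site \<Rightarrow> complex) \<Rightarrow> site \<Rightarrow> complex" where
  "h0 u n = u (fst n + 1, snd n) + u (fst n - 1, snd n)
          + u (fst n, snd n + 1) + u (fst n, snd n - 1)"

definition C0 :: "site set" where
  "C0 = {0,1} \<times> {0,1}"

definition Vab :: "real \<Rightarrow> real \<Rightarrow> site \<Rightarrow> real" where
  "Vab a b j = a * indicator C0 (fst j, snd j - 2) + b * indicator C0 (fst j + 2, snd j)"

definition hab :: "real \<Rightarrow> real \<Rightarrow> (site \<Rightarrow> complex) \<Rightarrow> site \<Rightarrow> complex" where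
  "hab a b u n = h0 u n + complex_of_real (Vab a b n) * u n"

text \<open>The resolvent applied to the delta function at j: the unique l^2 solution u of
  (h_{a,b} - z) u = delta_j.\<close>
definition resolvent_delta :: "real \<Rightarrow> real \<Rightarrow> complex \<Rightarrow> site \<Rightarrow> site \<Rightarrow> complex" where
  "resolvent_delta a b z j =
     (THE u. ell2 u \<and> (\<forall>n. hab a b u n - z * u n = (if n = j then 1 else 0)))"

text \<open>Matrix entries of chi_{C0} (h_{a,b} - z)^{-1} chi_{C0}: G i j = <delta_i, (h-z)^{-1} delta_j>.\<close>
definition Gmat :: "real \<Rightarrow> real \<Rightarrow> complex \<Rightarrow> site \<Rightarrow> site \<Rightarrow> complex" where
  "Gmat a b z i j = resolvent_delta a b z j i"

definition compressed_eigenvalues :: "real \<Rightarrow> real \<Rightarrow> complex \<Rightarrow> complex set" where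
  "compressed_eigenvalues a b z =
     {mu. \<exists>v :: site \<Rightarrow> complex. (\<exists>i\<in>C0. v i \<noteq> 0) \<and>
          (\<forall>i\<in>C0. (\<Sum>j\<in>C0. Gmat a b z i j * v j) = mu * v i)}"

end

theory Submission
  imports Defs "HOL-Computational_Algebra.Fundamental_Theorem_Algebra"
begin

(*
  For large |z| the resolvent of h = h_{a,b} is the Neumann series -(sum k. h^k / z^(k+1)).  With
  w = 1/z the compressed resolvent is therefore -w (1 + w N(w)), where N(w) = sum k. w^k chi h^(k+1) chi
  is analytic at w = 0, and its eigenvalues are simple iff those of N(w) are.  The leading term of N
  is the adjacency matrix of the square C0, with eigenvalues 2, -2, 0, 0.  In its eigenbasis and
  after subtracting a scalar power series, N(w) becomes diag(2, -2, 0, 0) + O(w), whose block on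
  the double eigenvalue 0 is (a - b) w^3 [[0, 1], [1, 0]] + O(w^4).  Hence the discriminant of its
  characteristic polynomial is w^6 (16384 (a - b)^2 + O(w)), which is nonzero for small w /= 0
  when a /= b, and a quartic with nonzero discriminant has four distinct roots.
*)

section \<open>Characteristic polynomials of 4 by 4 matrices\<close>

type_synonym mat4 = "nat \<Rightarrow> nat \<Rightarrow> complex"

definition skip_idx :: "nat \<Rightarrow> nat \<Rightarrow> nat" where "skip_idx i r = (if r < i then r else Suc r)"

definition det3 :: "mat4 \<Rightarrow> complex" where
 "det3 M = M 0 0 * (M 1 1 * M 2 2 - M 1 2 * M 2 1) - M 0 1 * (M 1 0 * M 2 2 - M 1 2 * M 2 0)
          + M 0 2 * (M 1 0 * M 2 1 - M 1 1 * M 2 0)"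

definition cofactor :: "mat4 \<Rightarrow> nat \<Rightarrow> nat \<Rightarrow> complex" where
 "cofactor M i j = (-1)^(i+j) * det3 (\<lambda>r c. M (skip_idx i r) (skip_idx j c))"

definition det4 :: "mat4 \<Rightarrow> complex" where
 "det4 M = (\<Sum>j<4. M 0 j * cofactor M 0 j)"

lemma sum_lessThan1: "(\<Sum>k<1::nat. f k) = f 0" by simp

lemma sum_lessThan2: "(\<Sum>k<2::nat. f k) = f 0 + f 1" by (simp add: eval_nat_numeral)

lemma sum_lessThan4: "(\<Sum>k<4::nat. f k) = f 0 + f 1 + f 2 + f 3"
  by (simp add: eval_nat_numeral)

lemma less4_iff: "(i::nat) < 4 \<longleftrightarrow> i = 0 \<or> i = 1 \<or> i = 2 \<or> i = 3" by auto

lemma less4_cases: "p < 4 \<Longrightarrow> P 0 \<Longrightarrow> P 1 \<Longrightarrow> P 2 \<Longrightarrow> P 3 \<Longrightarrow> P (p::nat)"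
  by (auto simp: less4_iff)

lemma cofactor_col_expansion: assumes "i < 4" "j < 4"
  shows "(\<Sum>k<4. cofactor A k i * A k j) = (if i = j then det4 A else 0)"
proof -
  have "i \<in> {0,1,2,3}" "j \<in> {0,1,2,3}" using assms by auto
  thus ?thesis
    unfolding sum_lessThan4 det4_def cofactor_def det3_def skip_idx_def
    by (auto simp: algebra_simps numeral_2_eq_2 numeral_3_eq_3)
qed

lemma cofactor_row_expansion: assumes "i < 4" "j < 4"
  shows "(\<Sum>k<4. A i k * cofactor A j k) = (if i = j then det4 A else 0)"
proof -
  have "i \<in> {0,1,2,3}" "j \<in> {0,1,2,3}" using assms by auto
  thus ?thesis
    unfolding sum_lessThan4 det4_def cofactor_def det3_def skip_idx_def
    by (auto simp: algebra_simps numeral_2_eq_2 numeral_3_eq_3)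
qed

definition char_mat :: "complex \<Rightarrow> mat4 \<Rightarrow> mat4" where
  "char_mat x M = (\<lambda>i j. (if i = j then x else 0) - M i j)"

definition minor3 :: "mat4 \<Rightarrow> nat \<Rightarrow> nat \<Rightarrow> nat \<Rightarrow> complex" where
  "minor3 M i j k = det3 (\<lambda>r c. M ([i,j,k]!r) ([i,j,k]!c))"
definition minor2 :: "mat4 \<Rightarrow> nat \<Rightarrow> nat \<Rightarrow> complex" where
  "minor2 M i j = M i i * M j j - M i j * M j i"

definition char_coeff3 :: "mat4 \<Rightarrow> complex" where "char_coeff3 M = - (M 0 0 + M 1 1 + M 2 2 + M 3 3)"
definition char_coeff2 :: "mat4 \<Rightarrow> complex" where "char_coeff2 M = minor2 M 0 1 + minor2 M 0 2 + minor2 M 0 3 + minor2 M 1 2 + minor2 M 1 3 + minor2 M 2 3"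
definition char_coeff1 :: "mat4 \<Rightarrow> complex" where "char_coeff1 M = - (minor3 M 0 1 2 + minor3 M 0 1 3 + minor3 M 0 2 3 + minor3 M 1 2 3)"
definition char_coeff0 :: "mat4 \<Rightarrow> complex" where "char_coeff0 M = det4 M"

lemma det4_char_mat:
  "det4 (char_mat x M) = x^4 + char_coeff3 M * x^3 + char_coeff2 M * x^2 + char_coeff1 M * x + char_coeff0 M"
  unfolding sum_lessThan4 det4_def cofactor_def det3_def skip_idx_def char_mat_def char_coeff3_def char_coeff2_def char_coeff1_def char_coeff0_def minor2_def minor3_def
  by (simp add: algebra_simps numeral_2_eq_2 numeral_3_eq_3 power2_eq_square power3_eq_cube power4_eq_xxxx)

text \<open>The left-hand side is the derivative of \<open>det4 (char_mat x M)\<close>.\<close>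
lemma trace_adj_char_mat:
  "4*x^3 + 3 * char_coeff3 M * x^2 + 2 * char_coeff2 M * x + char_coeff1 M = (\<Sum>i<4. cofactor (char_mat x M) i i)"
  unfolding sum_lessThan4 det4_def cofactor_def det3_def skip_idx_def char_mat_def char_coeff3_def char_coeff2_def char_coeff1_def char_coeff0_def minor2_def minor3_def
  by (simp add: algebra_simps numeral_2_eq_2 numeral_3_eq_3 power2_eq_square power3_eq_cube)

lemma char_mat_mult:
  assumes "k < 4"
  shows "(\<Sum>j<4. char_mat x M k j * v j) = x * v k - (\<Sum>j<4. M k j * v j)"
proof -
  have "(\<Sum>j<4. char_mat x M k j * v j) = (\<Sum>j<4. (if k = j then x else 0) * v j) - (\<Sum>j<4. M k j * v j)"
    by (simp add: char_mat_def left_diff_distrib sum_subtractf)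
  also have "(\<Sum>j<4. (if k = j then x else 0) * v j) = x * v k"
    using assms by (auto simp: sum_lessThan4 less4_iff)
  finally show ?thesis .
qed

lemma eigvec_char_root:
  assumes "\<forall>k<4. (\<Sum>j<4. M k j * v j) = x * v k" "i < 4" "v i \<noteq> 0"
  shows "det4 (char_mat x M) = 0"
proof -
  let ?A = "char_mat x M"
  have "det4 ?A * v i = (\<Sum>j<4. (if i = j then det4 ?A else 0) * v j)"
    using assms(2) by (auto simp: sum_lessThan4 less4_iff)
  also have "\<dots> = (\<Sum>j<4. (\<Sum>k<4. cofactor ?A k i * ?A k j) * v j)"
    by (rule sum.cong) (simp_all add: cofactor_col_expansion assms(2))
  also have "\<dots> = (\<Sum>k<4. cofactor ?A k i * (\<Sum>j<4. ?A k j * v j))"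
    by (simp add: sum_distrib_left sum_distrib_right mult.assoc) (rule sum.swap)
  also have "\<dots> = 0" using assms(1) by (simp add: char_mat_mult)
  finally show ?thesis using assms(3) by simp
qed

lemma cofactor_eigvec:
  assumes "det4 (char_mat x M) = 0" "i < 4" "cofactor (char_mat x M) i i \<noteq> 0"
  shows "\<exists>v. v i \<noteq> 0 \<and> (\<forall>k<4. (\<Sum>j<4. M k j * v j) = x * v k)"
proof -
  define v where "v = (\<lambda>j. cofactor (char_mat x M) i j)"
  have "(\<Sum>j<4. M k j * v j) = x * v k" if k: "k < 4" for k
  proof -
    have "(\<Sum>j<4. char_mat x M k j * v j) = 0"
      using cofactor_row_expansion[OF k assms(2), of "char_mat x M"] assms(1) by (simp add: v_def)
    thus ?thesis using char_mat_mult[OF k, of x M v] by simp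
  qed
  moreover have "v i \<noteq> 0" using assms(3) by (simp add: v_def)
  ultimately show ?thesis by blast
qed

definition quartic_disc :: "complex \<Rightarrow> complex \<Rightarrow> complex \<Rightarrow> complex \<Rightarrow> complex" where
  "quartic_disc B C D E = (256*E^3 - 27*D^4 + 144*C*D^2*E - 128*C^2*E^2 - 4*C^3*D^2 + 16*C^4*E - 192*B*D*E^2 + 18*B*C*D^3 - 80*B*C^2*D*E - 6*B^2*D^2*E + 144*B^2*C*E^2 + B^2*C^2*D^2 - 4*B^2*C^3*E - 4*B^3*D^3 + 18*B^3*C*D*E - 27*B^4*E^2)"

text \<open>The discriminant lies in the ideal generated by the quartic and its derivative.\<close>
lemma quartic_disc_certificate:
  "quartic_disc B C D E = ((256*E^2 + 96*C*D^2 - 128*C^2*E + 16*C^4 - 176*B*D*E - 68*B*C^2*D + B^2*D^2 + 144*B^2*C*E - 4*B^2*C^3 + 15*B^3*C*D - 27*B^4*E) + (- 192*D*E - 16*C^2*D + 120*B*D^2 + 32*B*C*E + 24*B*C^3 - 80*B^2*C*D - 6*B^3*C^2 + 18*B^4*D) * x + (144*D^2 - 128*C*E + 32*C^3 - 112*B*C*D + 48*B^2*E - 8*B^2*C^2 + 24*B^3*D) * x^2) * (x^4 + B*x^3 + C*x^2 + D*x + E)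
     + ((- 27*D^3 + 48*C*D*E - 4*C^3*D - 16*B*E^2 + 18*B*C*D^2 - 12*B*C^2*E - 7*B^2*D*E + B^2*C^2*D - 4*B^3*D^2 + 3*B^3*C*E) + (- 64*E^2 - 42*C*D^2 + 48*C^2*E - 8*C^4 + 56*B*D*E + 32*B*C^2*D - B^2*D^2 - 50*B^2*C*E + 2*B^2*C^3 - 7*B^3*C*D + 9*B^4*E) * x + (48*D*E + 4*C^2*D - 39*B*D^2 - 8*B*C^3 + 27*B^2*C*D - 3*B^3*E + 2*B^3*C^2 - 6*B^4*D) * x^2 + (- 36*D^2 + 32*C*E - 8*C^3 + 28*B*C*D - 12*B^2*E + 2*B^2*C^2 - 6*B^3*D) * x^3) * (4*x^3 + 3*B*x^2 + 2*C*x + D)"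
  unfolding quartic_disc_def by algebra

lemma quartic_root_simple:
  fixes B C D E x :: complex
  assumes "quartic_disc B C D E \<noteq> 0" and "x^4 + B*x^3 + C*x^2 + D*x + E = 0"
  shows "4*x^3 + 3*B*x^2 + 2*C*x + D \<noteq> 0"
  using assms quartic_disc_certificate[of B C D E x] by (auto simp del: mult_eq_0_iff)

lemma card_quartic_roots:
  fixes B C D E :: complex
  assumes disc: "quartic_disc B C D E \<noteq> 0"
  shows "card {x. x^4 + B*x^3 + C*x^2 + D*x + E = 0} = 4"
proof -
  define p where "p = [:E, D, C, B, 1:]"
  have poly_p: "poly p x = x^4 + B*x^3 + C*x^2 + D*x + E" for x
    by (simp add: p_def algebra_simps power2_eq_square power3_eq_cube power4_eq_xxxx)
  have poly_pderiv: "poly (pderiv p) x = 4*x^3 + 3*B*x^2 + 2*C*x + D" for x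
    by (simp add: p_def pderiv_pCons algebra_simps power2_eq_square power3_eq_cube)
  have p0: "p \<noteq> 0" and deg: "degree p = 4" by (simp_all add: p_def)
  have "rsquarefree p"
    unfolding rsquarefree_roots poly_p poly_pderiv using quartic_root_simple[OF disc] by blast
  hence "count (proots p) x = (if x \<in># proots p then 1 else 0)" for x
    using rsquarefree_root_order[of p x] p0 by (cases "poly p x = 0") (simp_all add: order_root)
  hence "proots p = mset_set (set_mset (proots p))"
    by (intro multiset_eqI) (simp add: count_mset_set)
  hence "card {x. poly p x = 0} = size (proots p)" by (metis set_count_proots[OF p0] size_mset_set)
  also have "\<dots> = 4" using size_proots_complex[of p] deg by simp
  finally show ?thesis by (simp add: poly_p)
qed

definition eigvals4 :: "mat4 \<Rightarrow> complex set" where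
  "eigvals4 M = {x. \<exists>v. (\<exists>i<4. v i \<noteq> 0) \<and> (\<forall>k<4. (\<Sum>j<4. M k j * v j) = x * v k)}"

lemma eigvals4_cong:
  assumes "\<And>p q. p < 4 \<Longrightarrow> q < 4 \<Longrightarrow> M p q = M' p q"
  shows "eigvals4 M = eigvals4 M'"
proof -
  have *: "k < 4 \<Longrightarrow> (\<Sum>j<4. M k j * v j) = (\<Sum>j<4. M' k j * v j)" for k v
    by (intro sum.cong) (auto simp: assms)
  show ?thesis unfolding eigvals4_def by (simp add: *)
qed

lemma eigvals4_eq_quartic_roots:
  assumes "quartic_disc (char_coeff3 M) (char_coeff2 M) (char_coeff1 M) (char_coeff0 M) \<noteq> 0"
  shows "eigvals4 M = {x. x^4 + char_coeff3 M * x^3 + char_coeff2 M * x^2 + char_coeff1 M * x + char_coeff0 M = 0}"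
proof
  show "eigvals4 M \<subseteq> {x. x^4 + char_coeff3 M * x^3 + char_coeff2 M * x^2 + char_coeff1 M * x + char_coeff0 M = 0}"
  proof
    fix x assume "x \<in> eigvals4 M"
    then obtain v i where "i < 4" "v i \<noteq> 0" "\<forall>k<4. (\<Sum>j<4. M k j * v j) = x * v k"
      unfolding eigvals4_def by blast
    hence "det4 (char_mat x M) = 0" by (intro eigvec_char_root) auto
    thus "x \<in> {x. x^4 + char_coeff3 M * x^3 + char_coeff2 M * x^2 + char_coeff1 M * x + char_coeff0 M = 0}" by (simp add: det4_char_mat)
  qed
  show "{x. x^4 + char_coeff3 M * x^3 + char_coeff2 M * x^2 + char_coeff1 M * x + char_coeff0 M = 0} \<subseteq> eigvals4 M"
  proof
    fix x assume "x \<in> {x. x^4 + char_coeff3 M * x^3 + char_coeff2 M * x^2 + char_coeff1 M * x + char_coeff0 M = 0}"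
    hence r: "x^4 + char_coeff3 M * x^3 + char_coeff2 M * x^2 + char_coeff1 M * x + char_coeff0 M = 0" by simp
    hence d: "det4 (char_mat x M) = 0" by (simp add: det4_char_mat)
    have "4*x^3 + 3 * char_coeff3 M * x^2 + 2 * char_coeff2 M * x + char_coeff1 M \<noteq> 0" by (rule quartic_root_simple[OF assms r])
    hence "(\<Sum>i<4. cofactor (char_mat x M) i i) \<noteq> 0" by (simp add: trace_adj_char_mat)
    then obtain i where i: "i < 4" "cofactor (char_mat x M) i i \<noteq> 0" by (meson lessThan_iff sum.neutral)
    from cofactor_eigvec[OF d i] show "x \<in> eigvals4 M" unfolding eigvals4_def using i(1) by blast
  qed
qed

lemma card_eigvals4:
  assumes "quartic_disc (char_coeff3 M) (char_coeff2 M) (char_coeff1 M) (char_coeff0 M) \<noteq> 0"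
  shows "card (eigvals4 M) = 4"
  unfolding eigvals4_eq_quartic_roots[OF assms] by (rule card_quartic_roots[OF assms])

lemma eigvals4_affine:
  assumes beta: "beta \<noteq> 0" and G: "\<And>p q. p < 4 \<Longrightarrow> q < 4 \<Longrightarrow> G p q = alpha * (if p = q then 1 else 0) + beta * N p q"
  shows "eigvals4 G = (\<lambda>nu. alpha + beta * nu) ` eigvals4 N"
proof -
  have Gv: "(\<Sum>j<4. G k j * v j) = alpha * v k + beta * (\<Sum>j<4. N k j * v j)" if k: "k < 4" for k v
  proof -
    have "(\<Sum>j<4. G k j * v j) = (\<Sum>j<4. alpha * ((if k = j then 1 else 0) * v j) + beta * (N k j * v j))"
      by (intro sum.cong) (auto simp: G k algebra_simps)
    also have "\<dots> = alpha * (\<Sum>j<4. (if k = j then 1 else 0) * v j) + beta * (\<Sum>j<4. N k j * v j)"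
      by (simp add: sum.distrib sum_distrib_left)
    also have "(\<Sum>j<4. (if k = j then 1 else 0) * v j) = v k" using k by (auto simp: sum_lessThan4 less4_iff)
    finally show ?thesis .
  qed
  show ?thesis
  proof
    show "eigvals4 G \<subseteq> (\<lambda>nu. alpha + beta * nu) ` eigvals4 N"
    proof
      fix mu assume "mu \<in> eigvals4 G"
      then obtain v where v1: "\<exists>i<4. v i \<noteq> 0" and v2: "\<forall>k<4. (\<Sum>j<4. G k j * v j) = mu * v k"
        unfolding eigvals4_def by blast
      have "\<forall>k<4. (\<Sum>j<4. N k j * v j) = ((mu - alpha) / beta) * v k"
        using v2 Gv beta by (auto simp: field_simps)
      hence "(mu - alpha) / beta \<in> eigvals4 N" using v1 unfolding eigvals4_def by blast
      moreover have "mu = alpha + beta * ((mu - alpha) / beta)" using beta by simp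
      ultimately show "mu \<in> (\<lambda>nu. alpha + beta * nu) ` eigvals4 N" by blast
    qed
    show "(\<lambda>nu. alpha + beta * nu) ` eigvals4 N \<subseteq> eigvals4 G"
    proof
      fix mu assume "mu \<in> (\<lambda>nu. alpha + beta * nu) ` eigvals4 N"
      then obtain nu where mu: "mu = alpha + beta * nu" and "nu \<in> eigvals4 N" by blast
      then obtain v where v1: "\<exists>i<4. v i \<noteq> 0" and v2: "\<forall>k<4. (\<Sum>j<4. N k j * v j) = nu * v k"
        unfolding eigvals4_def by blast
      have "\<forall>k<4. (\<Sum>j<4. G k j * v j) = mu * v k" using v2 Gv mu by (auto simp: algebra_simps)
      thus "mu \<in> eigvals4 G" using v1 unfolding eigvals4_def by blast
    qed
  qed
qed

lemma inverse_apply4: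
  fixes A B :: "nat \<Rightarrow> nat \<Rightarrow> complex" and x :: "nat \<Rightarrow> complex"
  assumes "\<And>i j. i < 4 \<Longrightarrow> j < 4 \<Longrightarrow> (\<Sum>k<4. A i k * B k j) = (if i = j then 1 else 0)" and i: "i < 4"
  shows "(\<Sum>k<4. A i k * (\<Sum>j<4. B k j * x j)) = (x i :: complex)"
proof -
  have "(\<Sum>k<4. A i k * (\<Sum>j<4. B k j * x j)) = (\<Sum>j<4. (\<Sum>k<4. A i k * B k j) * x j)"
  proof -
    have "(\<Sum>k<4. A i k * (\<Sum>j<4. B k j * x j)) = (\<Sum>k<4::nat. \<Sum>j<4::nat. A i k * B k j * x j)"
      by (simp add: sum_distrib_left mult_ac)
    also have "\<dots> = (\<Sum>j<4::nat. \<Sum>k<4::nat. A i k * B k j * x j)" by (rule sum.swap)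
    also have "\<dots> = (\<Sum>j<4. (\<Sum>k<4. A i k * B k j) * x j)" by (simp add: sum_distrib_right)
    finally show ?thesis .
  qed
  also have "\<dots> = (\<Sum>j<4. (if i = j then 1 else 0) * x j)" by (intro sum.cong) (auto simp: assms i)
  also have "\<dots> = x i" using i by (auto simp: sum_lessThan4 less4_iff)
  finally show ?thesis .
qed

lemma sum_conj_mult4:
  fixes N S T :: mat4
  shows "(\<Sum>q<4. (\<Sum>i<4. \<Sum>j<4. T p i * N i j * S j q) * y q) = (\<Sum>i<4. T p i * (\<Sum>j<4. N i j * (\<Sum>q<4. S j q * y q)))"
proof -
  have "(\<Sum>q<4. (\<Sum>i<4. \<Sum>j<4. T p i * N i j * S j q) * y q)
      = (\<Sum>q<4::nat. \<Sum>i<4::nat. \<Sum>j<4::nat. T p i * N i j * S j q * y q)"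
    by (simp add: sum_distrib_right)
  also have "\<dots> = (\<Sum>i<4::nat. \<Sum>q<4::nat. \<Sum>j<4::nat. T p i * N i j * S j q * y q)"
    by (rule sum.swap)
  also have "\<dots> = (\<Sum>i<4::nat. \<Sum>j<4::nat. \<Sum>q<4::nat. T p i * N i j * S j q * y q)"
    by (intro sum.cong refl sum.swap)
  also have "\<dots> = (\<Sum>i<4. T p i * (\<Sum>j<4. N i j * (\<Sum>q<4. S j q * y q)))"
    by (simp add: sum_distrib_left mult_ac)
  finally show ?thesis .
qed

lemma eigvals4_conj:
  fixes N S T :: mat4
  assumes TS: "\<And>p q. p < 4 \<Longrightarrow> q < 4 \<Longrightarrow> (\<Sum>i<4. T p i * S i q) = (if p = q then 1 else 0)"
    and ST: "\<And>p q. p < 4 \<Longrightarrow> q < 4 \<Longrightarrow> (\<Sum>i<4. S p i * T i q) = (if p = q then 1 else 0)"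
  shows "eigvals4 (\<lambda>p q. \<Sum>i<4. \<Sum>j<4. T p i * N i j * S j q) = eigvals4 N"
proof
  show "eigvals4 (\<lambda>p q. \<Sum>i<4. \<Sum>j<4. T p i * N i j * S j q) \<subseteq> eigvals4 N"
  proof
    fix mu assume "mu \<in> eigvals4 (\<lambda>p q. \<Sum>i<4. \<Sum>j<4. T p i * N i j * S j q)"
    then obtain y i0 where i0: "i0 < 4" "y i0 \<noteq> 0"
      and y: "\<forall>k<4. (\<Sum>q<4. (\<Sum>i<4. \<Sum>j<4. T k i * N i j * S j q) * y q) = mu * y k"
      unfolding eigvals4_def by blast
    define v where "v = (\<lambda>j. \<Sum>q<4. S j q * y q)"
    define u where "u = (\<lambda>i. \<Sum>j<4. N i j * v j)"
    have Tu: "(\<Sum>i<4. T p i * u i) = mu * y p" if "p < 4" for p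
      using y that by (simp add: u_def v_def sum_conj_mult4)
    have "(\<Sum>j<4. N k j * v j) = mu * v k" if k: "k < 4" for k
    proof -
      have "u k = (\<Sum>p<4. S k p * (\<Sum>i<4. T p i * u i))" by (rule inverse_apply4[OF ST k, symmetric])
      also have "\<dots> = (\<Sum>p<4. S k p * (mu * y p))" by (intro sum.cong refl) (simp add: Tu)
      also have "\<dots> = mu * v k" by (simp add: v_def sum_distrib_left mult_ac)
      finally show ?thesis by (simp add: u_def)
    qed
    moreover have "\<exists>j<4. v j \<noteq> 0"
    proof (rule ccontr)
      assume "\<not> (\<exists>j<4. v j \<noteq> 0)"
      hence "(\<Sum>i<4. T i0 i * v i) = 0" by (intro sum.neutral) auto
      thus False using inverse_apply4[OF TS i0(1), of y] i0(2) by (simp add: v_def)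
    qed
    ultimately show "mu \<in> eigvals4 N" unfolding eigvals4_def by blast
  qed
  show "eigvals4 N \<subseteq> eigvals4 (\<lambda>p q. \<Sum>i<4. \<Sum>j<4. T p i * N i j * S j q)"
  proof
    fix mu assume "mu \<in> eigvals4 N"
    then obtain v i0 where i0: "i0 < 4" "v i0 \<noteq> 0" and v: "\<forall>k<4. (\<Sum>j<4. N k j * v j) = mu * v k"
      unfolding eigvals4_def by blast
    define y where "y = (\<lambda>p. \<Sum>i<4. T p i * v i)"
    have Sy: "(\<Sum>q<4. S j q * y q) = v j" if "j < 4" for j
      unfolding y_def by (rule inverse_apply4[OF ST that])
    have "(\<Sum>q<4. (\<Sum>i<4. \<Sum>j<4. T p i * N i j * S j q) * y q) = mu * y p" for p
    proof -
      have "(\<Sum>q<4. (\<Sum>i<4. \<Sum>j<4. T p i * N i j * S j q) * y q) = (\<Sum>i<4. T p i * (\<Sum>j<4. N i j * v j))"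
        unfolding sum_conj_mult4 by (intro sum.cong refl) (simp add: Sy)
      also have "\<dots> = mu * y p" using v by (simp add: y_def sum_distrib_left mult_ac)
      finally show ?thesis .
    qed
    moreover have "\<exists>p<4. y p \<noteq> 0"
    proof (rule ccontr)
      assume "\<not> (\<exists>p<4. y p \<noteq> 0)"
      hence "(\<Sum>q<4. S i0 q * y q) = 0" by (intro sum.neutral) auto
      thus False using Sy[OF i0(1)] i0(2) by simp
    qed
    ultimately show "mu \<in> eigvals4 (\<lambda>p q. \<Sum>i<4. \<Sum>j<4. T p i * N i j * S j q)"
      unfolding eigvals4_def by blast
  qed
qed

section \<open>The discriminant of the normal form\<close>

text \<open>The shape of the compressed Neumann series in the eigenbasis of the square \<open>C0\<close>, after
  removing a scalar shift: the leading part \<open>diag(2, -2, 0, 0)\<close> plus the coupling \<open>d w^3\<close> of the two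
  zero modes, where \<open>d = a - b\<close>; all other contributions are \<open>P\<close> times a power of \<open>w\<close>.\<close>
definition Kshape :: "complex \<Rightarrow> complex \<Rightarrow> mat4 \<Rightarrow> mat4" where
  "Kshape w d P = (\<lambda>i j.
     if i = 0 \<and> j = 0 then 2 + w * P 0 0 else
     if i = 0 \<and> j = 1 then w * P 0 1 else
     if i = 1 \<and> j = 0 then w * P 1 0 else
     if i = 1 \<and> j = 1 then -2 + w * P 1 1 else
     if i = 2 \<and> j = 2 then w^4 * P 2 2 else
     if i = 3 \<and> j = 3 then w^4 * P 3 3 else
     if i = 2 \<and> j = 3 then d * w^3 + w^4 * P 2 3 else
     if i = 3 \<and> j = 2 then d * w^3 + w^4 * P 3 2 else
     w^2 * P i j)"

text \<open>Found by computer algebra: the coefficients of \<open>det4 (char_mat x (Kshape w d P))\<close> and its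
  discriminant, with their leading terms and powers of \<open>w\<close> split off.\<close>
definition beta1 :: "complex \<Rightarrow> mat4 \<Rightarrow> complex" where "beta1 w P = (- (P 1 1) - (P 0 0) - w^3*(P 3 3) - w^3*(P 2 2))"
definition beta2 :: "complex \<Rightarrow> complex \<Rightarrow> mat4 \<Rightarrow> complex" where "beta2 w d P = (2*(P 1 1) - 2*(P 0 0) - w*(P 0 1)*(P 1 0) + w*(P 0 0)*(P 1 1) - w^3*(P 1 3)*(P 3 1) - w^3*(P 1 2)*(P 2 1) - w^3*(P 0 3)*(P 3 0) - w^3*(P 0 2)*(P 2 0) + w^4*(P 1 1)*(P 3 3) + w^4*(P 1 1)*(P 2 2) + w^4*(P 0 0)*(P 3 3) + w^4*(P 0 0)*(P 2 2) - w^5*d^2 - w^6*d*(P 3 2) - w^6*d*(P 2 3) - w^7*(P 2 3)*(P 3 2) + w^7*(P 2 2)*(P 3 3))"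
definition beta3 :: "complex \<Rightarrow> complex \<Rightarrow> mat4 \<Rightarrow> complex" where "beta3 w d P = (4*(P 3 3) + 4*(P 2 2) + 2*(P 1 3)*(P 3 1) + 2*(P 1 2)*(P 2 1) - 2*(P 0 3)*(P 3 0) - 2*(P 0 2)*(P 2 0) - 2*w*(P 1 1)*(P 3 3) - 2*w*(P 1 1)*(P 2 2) + w*(P 1 1)*(P 0 3)*(P 3 0) + w*(P 1 1)*(P 0 2)*(P 2 0) - w*(P 1 0)*(P 0 3)*(P 3 1) - w*(P 1 0)*(P 0 2)*(P 2 1) - w*(P 0 1)*(P 1 3)*(P 3 0) - w*(P 0 1)*(P 1 2)*(P 2 0) + 2*w*(P 0 0)*(P 3 3) + 2*w*(P 0 0)*(P 2 2) + w*(P 0 0)*(P 1 3)*(P 3 1) + w*(P 0 0)*(P 1 2)*(P 2 1) + w^2*(P 0 1)*(P 1 0)*(P 3 3) + w^2*(P 0 1)*(P 1 0)*(P 2 2) - w^2*(P 0 0)*(P 1 1)*(P 3 3) - w^2*(P 0 0)*(P 1 1)*(P 2 2) - w^3*d*(P 1 3)*(P 2 1) - w^3*d*(P 1 2)*(P 3 1) - w^3*d*(P 0 3)*(P 2 0) - w^3*d*(P 0 2)*(P 3 0) + w^3*d^2*(P 1 1) + w^3*d^2*(P 0 0) + w^4*(P 1 3)*(P 3 1)*(P 2 2) - w^4*(P 1 3)*(P 2 1)*(P 3 2) - w^4*(P 1 2)*(P 3 1)*(P 2 3) + w^4*(P 1 2)*(P 2 1)*(P 3 3) + w^4*(P 0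 3)*(P 3 0)*(P 2 2) - w^4*(P 0 3)*(P 2 0)*(P 3 2) - w^4*(P 0 2)*(P 3 0)*(P 2 3) + w^4*(P 0 2)*(P 2 0)*(P 3 3) + w^4*d*(P 1 1)*(P 3 2) + w^4*d*(P 1 1)*(P 2 3) + w^4*d*(P 0 0)*(P 3 2) + w^4*d*(P 0 0)*(P 2 3) + w^5*(P 1 1)*(P 2 3)*(P 3 2) - w^5*(P 1 1)*(P 2 2)*(P 3 3) + w^5*(P 0 0)*(P 2 3)*(P 3 2) - w^5*(P 0 0)*(P 2 2)*(P 3 3))"
definition beta4 :: "complex \<Rightarrow> complex \<Rightarrow> mat4 \<Rightarrow> complex" where "beta4 w d P = (4*d*(P 3 2) + 4*d*(P 2 3) + 2*d*(P 1 3)*(P 2 1) + 2*d*(P 1 2)*(P 3 1) - 2*d*(P 0 3)*(P 2 0) - 2*d*(P 0 2)*(P 3 0) - 2*d^2*(P 1 1) + 2*d^2*(P 0 0) + 4*w*(P 2 3)*(P 3 2) - 4*w*(P 2 2)*(P 3 3) - 2*w*(P 1 3)*(P 3 1)*(P 2 2) + 2*w*(P 1 3)*(P 2 1)*(P 3 2) + 2*w*(P 1 2)*(P 3 1)*(P 2 3) - 2*w*(P 1 2)*(P 2 1)*(P 3 3) + 2*w*(P 0 3)*(P 3 0)*(P 2 2) - 2*w*(P 0 3)*(P 2 0)*(P 3 2) + w*(P 0 3)*(P 1 2)*(P 2 1)*(P 3 0) - w*(P 0 3)*(P 1 2)*(P 2 0)*(P 3 1) - 2*w*(P 0 2)*(P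 3 0)*(P 2 3) + 2*w*(P 0 2)*(P 2 0)*(P 3 3) - w*(P 0 2)*(P 1 3)*(P 2 1)*(P 3 0) + w*(P 0 2)*(P 1 3)*(P 2 0)*(P 3 1) - 2*w*d*(P 1 1)*(P 3 2) - 2*w*d*(P 1 1)*(P 2 3) + w*d*(P 1 1)*(P 0 3)*(P 2 0) + w*d*(P 1 1)*(P 0 2)*(P 3 0) - w*d*(P 1 0)*(P 0 3)*(P 2 1) - w*d*(P 1 0)*(P 0 2)*(P 3 1) - w*d*(P 0 1)*(P 1 3)*(P 2 0) - w*d*(P 0 1)*(P 1 2)*(P 3 0) + 2*w*d*(P 0 0)*(P 3 2) + 2*w*d*(P 0 0)*(P 2 3) + w*d*(P 0 0)*(P 1 3)*(P 2 1) + w*d*(P 0 0)*(P 1 2)*(P 3 1) + w*d^2*(P 0 1)*(P 1 0) - w*d^2*(P 0 0)*(P 1 1) - 2*w^2*(P 1 1)*(P 2 3)*(P 3 2) + 2*w^2*(P 1 1)*(P 2 2)*(P 3 3) - w^2*(P 1 1)*(P 0 3)*(P 3 0)*(P 2 2) + w^2*(P 1 1)*(P 0 3)*(P 2 0)*(P 3 2) + w^2*(P 1 1)*(P 0 2)*(P 3 0)*(P 2 3) - w^2*(P 1 1)*(P 0 2)*(P 2 0)*(P 3 3) + w^2*(P 1 0)*(P 0 3)*(P 3 1)*(P 2 2) - w^2*(P 1 0)*(P 0 3)*(P 2 1)*(P 3 2) - w^2*(P 1 0)*(P 0 2)*(P 3 1)*(P 2 3) + w^2*(P 1 0)*(P 0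 2)*(P 2 1)*(P 3 3) + w^2*(P 0 1)*(P 1 3)*(P 3 0)*(P 2 2) - w^2*(P 0 1)*(P 1 3)*(P 2 0)*(P 3 2) - w^2*(P 0 1)*(P 1 2)*(P 3 0)*(P 2 3) + w^2*(P 0 1)*(P 1 2)*(P 2 0)*(P 3 3) + 2*w^2*(P 0 0)*(P 2 3)*(P 3 2) - 2*w^2*(P 0 0)*(P 2 2)*(P 3 3) - w^2*(P 0 0)*(P 1 3)*(P 3 1)*(P 2 2) + w^2*(P 0 0)*(P 1 3)*(P 2 1)*(P 3 2) + w^2*(P 0 0)*(P 1 2)*(P 3 1)*(P 2 3) - w^2*(P 0 0)*(P 1 2)*(P 2 1)*(P 3 3) + w^2*d*(P 0 1)*(P 1 0)*(P 3 2) + w^2*d*(P 0 1)*(P 1 0)*(P 2 3) - w^2*d*(P 0 0)*(P 1 1)*(P 3 2) - w^2*d*(P 0 0)*(P 1 1)*(P 2 3) + w^3*(P 0 1)*(P 1 0)*(P 2 3)*(P 3 2) - w^3*(P 0 1)*(P 1 0)*(P 2 2)*(P 3 3) - w^3*(P 0 0)*(P 1 1)*(P 2 3)*(P 3 2) + w^3*(P 0 0)*(P 1 1)*(P 2 2)*(P 3 3))"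
definition disc_rest :: "complex \<Rightarrow> complex \<Rightarrow> complex \<Rightarrow> complex \<Rightarrow> complex \<Rightarrow> complex \<Rightarrow> complex" where
  "disc_rest w d b1 b2 b3 b4 = (4096*b4 - 16384*d^2*b2 + 256*w*b3^2 - 4096*w*b2*b4 + 6144*w*d^2*b2^2 + 1024*w*d^2*b1^2 - 192*w^2*b2*b3^2 + 1536*w^2*b2^2*b4 + 256*w^2*b1^2*b4 - 1024*w^2*d^2*b2^3 - 768*w^2*d^2*b1^2*b2 + 48*w^3*b2^2*b3^2 - 256*w^3*b2^3*b4 + 16*w^3*b1^2*b3^2 - 192*w^3*b1^2*b2*b4 + 64*w^3*d^2*b2^4 + 192*w^3*d^2*b1^2*b2^2 - 4*w^4*b2^3*b3^2 + 16*w^4*b2^4*b4 - 8*w^4*b1^2*b2*b3^2 + 48*w^4*b1^2*b2^2*b4 - 5120*w^4*d^2*b1*b3 - 16*w^4*d^2*b1^2*b2^3 - 1280*w^5*b1*b3*b4 + w^5*b1^2*b2^2*b3^2 - 4*w^5*b1^2*b2^3*b4 + 2560*w^5*d^2*b1*b2*b3 - 32768*w^5*d^4 - 72*w^6*b1*b3^3 + 640*w^6*b1*b2*b3*b4 - 16384*w^6*d^2*b4 - 320*w^6*d^2*b1*b2^2*b3 - 288*w^6*d^2*b1^3*b3 + 16384*w^6*d^4*b2 - 2048*w^7*b4^2 + 18*w^7*b1*b2*b3^3 - 80*w^7*b1*b2^2*b3*b4 - 72*w^7*b1^3*b3*b4 - 2304*w^7*d^2*b3^2 + 8192*w^7*d^2*b2*b4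 + 72*w^7*d^2*b1^3*b2*b3 - 2048*w^7*d^4*b2^2 - 9216*w^7*d^4*b1^2 - 576*w^8*b3^2*b4 + 1024*w^8*b2*b4^2 - 4*w^8*b1^3*b3^3 + 18*w^8*b1^3*b2*b3*b4 + 576*w^8*d^2*b2*b3^2 - 1024*w^8*d^2*b2^2*b4 - 4608*w^8*d^2*b1^2*b4 + 2304*w^8*d^4*b1^2*b2 - 27*w^9*b3^4 + 144*w^9*b2*b3^2*b4 - 128*w^9*b2^2*b4^2 - 576*w^9*b1^2*b4^2 - 24*w^9*d^2*b1^2*b3^2 + 1152*w^9*d^2*b1^2*b2*b4 - 432*w^9*d^4*b1^4 - 6*w^10*b1^2*b3^2*b4 + 144*w^10*b1^2*b2*b4^2 - 216*w^10*d^2*b1^4*b4 - 3072*w^10*d^4*b1*b3 - 27*w^11*b1^4*b4^2 - 1536*w^11*d^2*b1*b3*b4 + 16384*w^11*d^6 - 192*w^12*b1*b3*b4^2 + 12288*w^12*d^4*b4 + 3072*w^13*d^2*b4^2 + 256*w^14*b4^3)"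

lemma Kshape_simps:
  "Kshape w d P 0 0 = 2 + w * P 0 0" "Kshape w d P 0 1 = w * P 0 1" "Kshape w d P 0 2 = w^2 * P 0 2" "Kshape w d P 0 3 = w^2 * P 0 3"
  "Kshape w d P 1 0 = w * P 1 0" "Kshape w d P 1 1 = -2 + w * P 1 1" "Kshape w d P 1 2 = w^2 * P 1 2" "Kshape w d P 1 3 = w^2 * P 1 3"
  "Kshape w d P 2 0 = w^2 * P 2 0" "Kshape w d P 2 1 = w^2 * P 2 1" "Kshape w d P 2 2 = w^4 * P 2 2" "Kshape w d P 2 3 = d * w^3 + w^4 * P 2 3"
  "Kshape w d P 3 0 = w^2 * P 3 0" "Kshape w d P 3 1 = w^2 * P 3 1" "Kshape w d P 3 2 = d * w^3 + w^4 * P 3 2" "Kshape w d P 3 3 = w^4 * P 3 3"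
  by (simp_all add: Kshape_def)

lemma Suc_numerals: "Suc 0 = 1" "Suc 1 = 2" "Suc 2 = 3" by simp_all

lemma char_coeff3_Kshape: "char_coeff3 (Kshape w d P) = w * beta1 w P"
  unfolding char_coeff3_def Kshape_simps beta1_def by algebra
lemma char_coeff2_Kshape: "char_coeff2 (Kshape w d P) = -4 + w * beta2 w d P"
  unfolding char_coeff2_def minor2_def Kshape_simps beta2_def by algebra
lemma char_coeff1_Kshape: "char_coeff1 (Kshape w d P) = w^4 * beta3 w d P"
  unfolding char_coeff1_def minor3_def det3_def beta3_def
  apply (simp add: Kshape_simps)
  apply (simp only: Suc_numerals Kshape_simps)
  apply algebra
  done
lemma char_coeff0_Kshape: "char_coeff0 (Kshape w d P) = w^6 * (4 * d^2 + w * beta4 w d P)"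
  unfolding char_coeff0_def det4_def sum_lessThan4 cofactor_def det3_def skip_idx_def beta4_def
  apply (simp add: Kshape_def)
  apply (simp only: Suc_numerals Kshape_simps)
  apply algebra
  done

lemma quartic_disc_Kshape_coeffs: "quartic_disc (w * b1) (-4 + w * b2) (w^4 * b3) (w^6 * (4 * d^2 + w * b4))
   = w^6 * (16384 * d^2 + w * disc_rest w d b1 b2 b3 b4)"
  unfolding quartic_disc_def disc_rest_def by algebra

lemma quartic_disc_Kshape: "quartic_disc (char_coeff3 (Kshape w d P)) (char_coeff2 (Kshape w d P)) (char_coeff1 (Kshape w d P)) (char_coeff0 (Kshape w d P))
   = w^6 * (16384 * d^2 + w * disc_rest w d (beta1 w P) (beta2 w d P) (beta3 w d P) (beta4 w d P))"
  unfolding char_coeff3_Kshape char_coeff2_Kshape char_coeff1_Kshape char_coeff0_Kshape by (rule quartic_disc_Kshape_coeffs)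

section \<open>The resolvent as a Neumann series\<close>

definition delta :: "site \<Rightarrow> site \<Rightarrow> complex" where "delta j = (\<lambda>n. if n = j then 1 else 0)"
definition hpow :: "real \<Rightarrow> real \<Rightarrow> nat \<Rightarrow> site \<Rightarrow> site \<Rightarrow> complex" where
  "hpow a b k j = (hab a b ^^ k) (delta j)"

lemma hpow_Suc: "hpow a b (Suc k) j = hab a b (hpow a b k j)" by (simp add: hpow_def)
lemma hpow_0: "hpow a b 0 j = delta j" by (simp add: hpow_def)

lemma hab_at: "hab a b u (x, y) = u (x+1, y) + u (x - 1, y) + u (x, y+1) + u (x, y - 1)
   + complex_of_real (a * indicator C0 (x, y - 2) + b * indicator C0 (x + 2, y)) * u (x, y)"
  by (simp add: hab_def h0_def Vab_def)

lemma mem_C0: "(x, y) \<in> C0 \<longleftrightarrow> (x = 0 \<or> x = 1) \<and> (y = 0 \<or> y = 1)" by (auto simp: C0_def)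

lemma hpow_C0:
  fixes a b :: real
  defines "A \<equiv> complex_of_real a" and "B \<equiv> complex_of_real b"
  shows
  "hpow a b 1 (0,0) (0,0) = 0"
  "hpow a b 1 (1,0) (0,0) = 1"
  "hpow a b 1 (1,1) (0,0) = 0"
  "hpow a b 1 (0,1) (0,0) = 1"
  "hpow a b 1 (0,0) (1,0) = 1"
  "hpow a b 1 (1,0) (1,0) = 0"
  "hpow a b 1 (1,1) (1,0) = 1"
  "hpow a b 1 (0,1) (1,0) = 0"
  "hpow a b 1 (0,0) (1,1) = 0"
  "hpow a b 1 (1,0) (1,1) = 1"
  "hpow a b 1 (1,1) (1,1) = 0"
  "hpow a b 1 (0,1) (1,1) = 1"
  "hpow a b 1 (0,0) (0,1) = 1"
  "hpow a b 1 (1,0) (0,1) = 0"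
  "hpow a b 1 (1,1) (0,1) = 1"
  "hpow a b 1 (0,1) (0,1) = 0"
  "hpow a b 2 (0,0) (0,0) = 4"
  "hpow a b 2 (1,0) (0,0) = 0"
  "hpow a b 2 (1,1) (0,0) = 2"
  "hpow a b 2 (0,1) (0,0) = 0"
  "hpow a b 2 (0,0) (1,0) = 0"
  "hpow a b 2 (1,0) (1,0) = 4"
  "hpow a b 2 (1,1) (1,0) = 0"
  "hpow a b 2 (0,1) (1,0) = 2"
  "hpow a b 2 (0,0) (1,1) = 2"
  "hpow a b 2 (1,0) (1,1) = 0"
  "hpow a b 2 (1,1) (1,1) = 4"
  "hpow a b 2 (0,1) (1,1) = 0"
  "hpow a b 2 (0,0) (0,1) = 0"
  "hpow a b 2 (1,0) (0,1) = 2"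
  "hpow a b 2 (1,1) (0,1) = 0"
  "hpow a b 2 (0,1) (0,1) = 4"
  "hpow a b 3 (0,0) (0,0) = B"
  "hpow a b 3 (1,0) (0,0) = 9"
  "hpow a b 3 (1,1) (0,0) = 0"
  "hpow a b 3 (0,1) (0,0) = 9"
  "hpow a b 3 (0,0) (1,0) = 9"
  "hpow a b 3 (1,0) (1,0) = 0"
  "hpow a b 3 (1,1) (1,0) = 9"
  "hpow a b 3 (0,1) (1,0) = 0"
  "hpow a b 3 (0,0) (1,1) = 0"
  "hpow a b 3 (1,0) (1,1) = 9"
  "hpow a b 3 (1,1) (1,1) = A"
  "hpow a b 3 (0,1) (1,1) = 9"
  "hpow a b 3 (0,0) (0,1) = 9"
  "hpow a b 3 (1,0) (0,1) = 0"
  "hpow a b 3 (1,1) (0,1) = 9"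
  "hpow a b 3 (0,1) (0,1) = B + A"
  "hpow a b 4 (0,0) (0,0) = 36 + B^2"
  "hpow a b 4 (1,0) (0,0) = B"
  "hpow a b 4 (1,1) (0,0) = 24"
  "hpow a b 4 (0,1) (0,0) = 4*B + A"
  "hpow a b 4 (0,0) (1,0) = B"
  "hpow a b 4 (1,0) (1,0) = 36"
  "hpow a b 4 (1,1) (1,0) = A"
  "hpow a b 4 (0,1) (1,0) = 24"
  "hpow a b 4 (0,0) (1,1) = 24"
  "hpow a b 4 (1,0) (1,1) = A"
  "hpow a b 4 (1,1) (1,1) = 36 + A^2"
  "hpow a b 4 (0,1) (1,1) = B + 4*A"
  "hpow a b 4 (0,0) (0,1) = 4*B + A"
  "hpow a b 4 (1,0) (0,1) = 24"
  "hpow a b 4 (1,1) (0,1) = B + 4*A"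
  "hpow a b 4 (0,1) (0,1) = 36 + B^2 + A^2"
  by (simp_all add: numeral_eq_Suc hpow_Suc hpow_0 hab_at delta_def indicator_def mem_C0 A_def B_def algebra_simps)

definition hbound :: "real \<Rightarrow> real \<Rightarrow> real" where "hbound a b = 4 + \<bar>a\<bar> + \<bar>b\<bar>"

lemma hbound_ge_4: "hbound a b \<ge> 4" by (simp add: hbound_def)

lemma norm_add5_le: "norm ((p::complex) + q + r + s + t) \<le> norm p + norm q + norm r + norm s + norm t"
  using norm_triangle_ineq[of "p+q+r+s" t] norm_triangle_ineq[of "p+q+r" s] norm_triangle_ineq[of "p+q" r]
    norm_triangle_ineq[of p q] by linarith

lemma norm_hab_le:
  assumes "\<And>n. norm (u n) \<le> M"
  shows "norm (hab a b u n) \<le> hbound a b * M"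
proof -
  obtain x y where n: "n = (x, y)" by (cases n)
  have M0: "0 \<le> M" using assms[of n] norm_ge_zero order_trans by blast
  have V: "norm (complex_of_real (a * indicator C0 (x, y - 2) + b * indicator C0 (x + 2, y))) \<le> \<bar>a\<bar> + \<bar>b\<bar>"
  proof -
    have "\<bar>a * indicator C0 (x, y - 2)\<bar> \<le> \<bar>a\<bar>" by (simp add: indicator_def abs_mult)
    moreover have "\<bar>b * indicator C0 (x + 2, y)\<bar> \<le> \<bar>b\<bar>" by (simp add: indicator_def abs_mult)
    ultimately show ?thesis unfolding norm_of_real by linarith
  qed
  have "norm (hab a b u n) \<le> norm (u (x+1, y)) + norm (u (x - 1, y)) + norm (u (x, y+1)) + norm (u (x, y - 1))
      + norm (complex_of_real (a * indicator C0 (x, y - 2) + b * indicator C0 (x + 2, y))) * norm (u (x, y))"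
    unfolding n hab_at using norm_add5_le by (metis norm_mult)
  also have "\<dots> \<le> M + M + M + M + (\<bar>a\<bar> + \<bar>b\<bar>) * M"
    by (intro add_mono mult_mono assms V) (auto simp: M0)
  also have "\<dots> = hbound a b * M" by (simp add: hbound_def algebra_simps)
  finally show ?thesis .
qed

lemma norm_hpow_le: "norm (hpow a b k j n) \<le> hbound a b ^ k"
proof (induction k arbitrary: n)
  case 0 thus ?case by (simp add: hpow_0 delta_def)
next
  case (Suc k)
  have "norm (hpow a b (Suc k) j n) \<le> hbound a b * hbound a b ^ k"
    unfolding hpow_Suc by (rule norm_hab_le) (rule Suc.IH)
  thus ?case by simp
qed

definition taxi_dist :: "site \<Rightarrow> site \<Rightarrow> nat" where
  "taxi_dist n j = nat (\<bar>fst n - fst j\<bar> + \<bar>snd n - snd j\<bar>)"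

lemma hpow_eq_0_far: "k < taxi_dist n j \<Longrightarrow> hpow a b k j n = 0"
proof (induction k arbitrary: n)
  case 0
  hence "n \<noteq> j" by (auto simp: taxi_dist_def)
  thus ?case by (simp add: hpow_0 delta_def)
next
  case (Suc k)
  obtain x y where n: "n = (x, y)" by (cases n)
  have "k < taxi_dist (x+1, y) j" "k < taxi_dist (x - 1, y) j" "k < taxi_dist (x, y+1) j" "k < taxi_dist (x, y - 1) j" "k < taxi_dist (x, y) j"
    using Suc.prems unfolding n taxi_dist_def by auto
  thus ?case unfolding n hpow_Suc hab_at using Suc.IH by simp
qed

lemma norm_neumann_term_le:
  assumes hw: "2 * hbound a b * norm w \<le> 1"
  shows "norm (hpow a b k j n * w^Suc k) \<le> norm w * (1/2)^k"
proof -
  have L0: "0 \<le> hbound a b" using hbound_ge_4[of a b] by linarith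
  have "norm (hpow a b k j n * w^Suc k) = norm (hpow a b k j n) * (norm w ^ k * norm w)"
    by (simp add: norm_mult norm_power)
  also have "\<dots> \<le> hbound a b ^ k * (norm w ^ k * norm w)"
    by (intro mult_right_mono norm_hpow_le) auto
  also have "\<dots> = (hbound a b * norm w) ^ k * norm w" by (simp add: power_mult_distrib)
  also have "\<dots> \<le> (1/2) ^ k * norm w"
    by (intro mult_right_mono power_mono) (use hw L0 in auto)
  finally show ?thesis by (simp add: mult.commute)
qed

lemma summable_const_half_pow: "summable (\<lambda>k. c * (1/2::real)^k)"
  by (intro summable_mult summable_geometric) auto

lemma summable_neumann_terms:
  assumes "2 * hbound a b * norm w \<le> 1"
  shows "summable (\<lambda>k. hpow a b k j n * w^Suc k)"
  by (rule summable_comparison_test'[OF summable_const_half_pow[of "norm w"], of 0]) (use norm_neumann_term_le[OF assms] in auto)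

definition neumann :: "real \<Rightarrow> real \<Rightarrow> complex \<Rightarrow> site \<Rightarrow> site \<Rightarrow> complex" where
  "neumann a b w j n = - (\<Sum>k. hpow a b k j n * w^Suc k)"

lemma neumann_sums:
  assumes "2 * hbound a b * norm w \<le> 1"
  shows "(\<lambda>k. hpow a b k j n * w^Suc k) sums (- neumann a b w j n)"
  using summable_sums[OF summable_neumann_terms[OF assms]] by (simp add: neumann_def)

lemma neumann_solves:
  assumes hw: "2 * hbound a b * norm w \<le> 1" and w0: "w \<noteq> 0"
  shows "hab a b (neumann a b w j) n - (1/w) * neumann a b w j n = delta j n"
proof -
  obtain x y where n: "n = (x, y)" by (cases n)
  define V where "V = complex_of_real (a * indicator C0 (x, y - 2) + b * indicator C0 (x + 2, y))"
  let ?g = "\<lambda>p k. hpow a b k j p * w^Suc k"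
  have S: "\<And>p. ?g p sums (- neumann a b w j p)" using neumann_sums[OF hw] .
  have "(\<lambda>k. ?g (x+1,y) k + ?g (x - 1,y) k + ?g (x,y+1) k + ?g (x,y - 1) k + V * ?g (x,y) k) sums
        (- neumann a b w j (x+1,y) + - neumann a b w j (x - 1,y) + - neumann a b w j (x,y+1) + - neumann a b w j (x,y - 1)
         + V * - neumann a b w j (x,y))"
    by (intro sums_add sums_mult S)
  moreover have "\<And>k. ?g (x+1,y) k + ?g (x - 1,y) k + ?g (x,y+1) k + ?g (x,y - 1) k + V * ?g (x,y) k
        = hpow a b (Suc k) j (x,y) * w^Suc k"
    by (simp add: hpow_Suc hab_at V_def algebra_simps)
  ultimately have A: "(\<lambda>k. hpow a b (Suc k) j n * w^Suc k) sums (- hab a b (neumann a b w j) n)"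
    unfolding n by (simp add: hab_at V_def algebra_simps)
  have sm: "summable (\<lambda>k. hpow a b k j n * w^k)"
  proof -
    have "summable (\<lambda>k. (1/w) * (hpow a b k j n * w^Suc k))"
      by (intro summable_mult summable_neumann_terms hw)
    thus ?thesis using w0 by (simp add: field_simps)
  qed
  have B: "(1/w) * neumann a b w j n = - (\<Sum>k. hpow a b k j n * w^k)"
  proof -
    have "(1/w) * neumann a b w j n = - (\<Sum>k. (1/w) * (hpow a b k j n * w^Suc k))"
      unfolding neumann_def by (subst suminf_mult[OF summable_neumann_terms[OF hw]]) simp
    also have "(\<lambda>k. (1/w) * (hpow a b k j n * w^Suc k)) = (\<lambda>k. hpow a b k j n * w^k)"
      using w0 by (simp add: field_simps)
    finally show ?thesis .
  qed
  have C: "(\<Sum>k. hpow a b k j n * w^k) = hpow a b 0 j n + (\<Sum>k. hpow a b (Suc k) j n * w^Suc k)"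
    using suminf_split_head[OF sm] by simp
  have A': "hab a b (neumann a b w j) n = - (\<Sum>k. hpow a b (Suc k) j n * w^Suc k)"
    using sums_unique[OF A] by (metis minus_minus)
  show ?thesis unfolding A' B C hpow_0 by simp
qed

text \<open>As \<open>hpow a b k j\<close> vanishes beyond taxi distance \<open>k\<close> from \<open>j\<close>, the series for
  \<open>neumann a b w j n\<close> starts at \<open>k = taxi_dist n j\<close>; hence exponential decay.\<close>
lemma norm_neumann_le:
  assumes hw: "2 * hbound a b * norm w \<le> 1"
  shows "norm (neumann a b w j n) \<le> 2 * norm w * (1/2)^(taxi_dist n j)"
proof -
  define d where "d = taxi_dist n j"
  let ?g = "\<lambda>k. hpow a b k j n * w^Suc k"
  have "?g sums (- neumann a b w j n)" by (rule neumann_sums[OF hw])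
  hence "(\<lambda>i. ?g (i + d)) sums (- neumann a b w j n)"
    by (subst sums_zero_iff_shift) (auto simp: hpow_eq_0_far d_def)
  hence eq: "neumann a b w j n = - (\<Sum>i. ?g (i + d))" by (metis minus_minus sums_unique)
  have bd: "norm (?g (i + d)) \<le> norm w * (1/2)^d * (1/2)^i" for i
    using norm_neumann_term_le[OF hw, of "i + d" j n] by (simp add: power_add mult_ac)
  have sg: "summable (\<lambda>i. norm w * (1/2)^d * (1/2::real)^i)" by (rule summable_const_half_pow)
  have "norm (neumann a b w j n) \<le> (\<Sum>i. norm w * (1/2)^d * (1/2::real)^i)"
    unfolding eq norm_minus_cancel by (rule norm_suminf_le[OF bd sg])
  also have "\<dots> = norm w * (1/2)^d * 2"
    by (subst suminf_mult) (auto simp: suminf_geometric)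
  finally show ?thesis by (simp add: d_def mult_ac)
qed

lemma sum_pow_nat_le:
  fixes r :: real assumes "0 \<le> r" "r < 1" "finite K"
  shows "(\<Sum>k\<in>K. r^k) \<le> 1 / (1 - r)"
proof -
  have "(\<Sum>k\<in>K. r^k) \<le> (\<Sum>k. r^k)"
    by (rule sum_le_suminf) (use assms in \<open>auto intro: summable_geometric\<close>)
  also have "\<dots> = 1 / (1 - r)" using assms by (simp add: suminf_geometric)
  finally show ?thesis .
qed

lemma sum_pow_abs_int_le:
  fixes r :: real assumes r: "0 \<le> r" "r < 1" and X: "finite X"
  shows "(\<Sum>x\<in>X. r^(nat \<bar>x - c\<bar>)) \<le> 2 / (1 - r)"
proof -
  define X1 where "X1 = {x\<in>X. c \<le> x}"
  define X2 where "X2 = {x\<in>X. x < c}"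
  have fin: "finite X1" "finite X2" using X by (auto simp: X1_def X2_def)
  have XU: "X = X1 \<union> X2" "X1 \<inter> X2 = {}" by (auto simp: X1_def X2_def)
  have "(\<Sum>x\<in>X1. r^(nat \<bar>x - c\<bar>)) = (\<Sum>x\<in>X1. r^(nat (x - c)))"
    by (rule sum.cong) (auto simp: X1_def)
  also have "\<dots> = (\<Sum>k\<in>(\<lambda>x. nat (x - c)) ` X1. r^k)"
    by (subst sum.reindex) (auto simp: inj_on_def X1_def)
  also have "\<dots> \<le> 1 / (1 - r)" by (rule sum_pow_nat_le) (use r fin in auto)
  finally have 1: "(\<Sum>x\<in>X1. r^(nat \<bar>x - c\<bar>)) \<le> 1 / (1 - r)" .
  have "(\<Sum>x\<in>X2. r^(nat \<bar>x - c\<bar>)) = (\<Sum>x\<in>X2. r^(nat (c - x)))"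
    by (rule sum.cong) (auto simp: X2_def)
  also have "\<dots> = (\<Sum>k\<in>(\<lambda>x. nat (c - x)) ` X2. r^k)"
    by (subst sum.reindex) (auto simp: inj_on_def X2_def)
  also have "\<dots> \<le> 1 / (1 - r)" by (rule sum_pow_nat_le) (use r fin in auto)
  finally have 2: "(\<Sum>x\<in>X2. r^(nat \<bar>x - c\<bar>)) \<le> 1 / (1 - r)" .
  have "(\<Sum>x\<in>X. r^(nat \<bar>x - c\<bar>)) = (\<Sum>x\<in>X1. r^(nat \<bar>x - c\<bar>)) + (\<Sum>x\<in>X2. r^(nat \<bar>x - c\<bar>))"
    unfolding XU(1) by (rule sum.union_disjoint) (use fin XU in auto)
  thus ?thesis using 1 2 by simp
qed

lemma summable_on_pow_taxi_dist:
  fixes r :: real assumes r: "0 \<le> r" "r < 1"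
  shows "(\<lambda>n::site. r^(nat \<bar>fst n - c1\<bar>) * r^(nat \<bar>snd n - c2\<bar>)) summable_on UNIV"
proof (rule nonneg_bdd_above_summable_on)
  show "bdd_above (sum (\<lambda>n::site. r^(nat \<bar>fst n - c1\<bar>) * r^(nat \<bar>snd n - c2\<bar>)) ` {F. F \<subseteq> UNIV \<and> finite F})"
  proof (rule bdd_aboveI2)
    fix F :: "site set" assume "F \<in> {F. F \<subseteq> UNIV \<and> finite F}"
    hence F: "finite F" by simp
    have "(\<Sum>n\<in>F. r^(nat \<bar>fst n - c1\<bar>) * r^(nat \<bar>snd n - c2\<bar>))
        \<le> (\<Sum>n\<in>fst ` F \<times> snd ` F. r^(nat \<bar>fst n - c1\<bar>) * r^(nat \<bar>snd n - c2\<bar>))"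
      by (rule sum_mono2) (use F r in \<open>auto simp: rev_image_eqI\<close>)
    also have "\<dots> = (\<Sum>x\<in>fst ` F. r^(nat \<bar>x - c1\<bar>)) * (\<Sum>y\<in>snd ` F. r^(nat \<bar>y - c2\<bar>))"
      by (simp add: sum_product sum.cartesian_product split_def)
    also have "\<dots> \<le> (2 / (1 - r)) * (2 / (1 - r))"
      by (intro mult_mono sum_pow_abs_int_le sum_nonneg) (use F r in auto)
    finally show "(\<Sum>n\<in>F. r^(nat \<bar>fst n - c1\<bar>) * r^(nat \<bar>snd n - c2\<bar>)) \<le> (2 / (1 - r)) * (2 / (1 - r))" .
  qed
qed (use r in auto)

lemma ell2_neumann:
  assumes hw: "2 * hbound a b * norm w \<le> 1"
  shows "ell2 (neumann a b w j)"
  unfolding ell2_def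
proof (rule summable_on_comparison_test)
  let ?F = "\<lambda>n::site. 4 * ((1/4::real)^(nat \<bar>fst n - fst j\<bar>) * (1/4)^(nat \<bar>snd n - snd j\<bar>))"
  show "?F summable_on UNIV"
    by (intro summable_on_cmult_right summable_on_pow_taxi_dist) auto
  fix n :: site
  have "8 * norm w \<le> 2 * hbound a b * norm w" using hbound_ge_4[of a b] by (intro mult_right_mono) auto
  hence w1: "norm w \<le> 1" using hw by linarith
  have "norm (neumann a b w j n) \<le> 2 * norm w * (1/2)^(taxi_dist n j)" by (rule norm_neumann_le[OF hw])
  also have "\<dots> \<le> 2 * (1/2)^(taxi_dist n j)" using w1 by simp
  finally have b: "norm (neumann a b w j n) \<le> 2 * (1/2)^(taxi_dist n j)" .
  have "(norm (neumann a b w j n))\<^sup>2 \<le> (2 * (1/2)^(taxi_dist n j))\<^sup>2"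
    by (rule power_mono[OF b norm_ge_zero])
  also have "\<dots> = 4 * (1/4::real)^(taxi_dist n j)" by (simp add: power_mult_distrib power_even_eq power2_eq_square
       flip: power_mult power_mult_distrib)
  also have "taxi_dist n j = nat \<bar>fst n - fst j\<bar> + nat \<bar>snd n - snd j\<bar>" by (simp add: taxi_dist_def nat_add_distrib)
  finally show "(norm (neumann a b w j n))\<^sup>2 \<le> ?F n" by (simp add: power_add)
  show "0 \<le> (norm (neumann a b w j n))\<^sup>2" by simp
qed

lemma ell2_finite_level_set:
  assumes u: "ell2 u" and e: "0 < e"
  shows "finite {n. e \<le> norm (u n)}"
proof (rule ccontr)
  assume inf: "infinite {n. e \<le> norm (u n)}"
  let ?f = "\<lambda>n. (norm (u n))\<^sup>2"
  have sf: "?f summable_on UNIV" using u by (simp add: ell2_def)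
  define I where "I = infsum ?f UNIV"
  obtain N :: nat where N: "I / e\<^sup>2 < real N" using reals_Archimedean2 by blast
  obtain T where T: "T \<subseteq> {n. e \<le> norm (u n)}" "finite T" "card T = N"
    using infinite_arbitrarily_large[OF inf] by blast
  have "real (card T) * e\<^sup>2 \<le> sum ?f T"
  proof -
    have "\<And>n. n \<in> T \<Longrightarrow> e\<^sup>2 \<le> ?f n" using T(1) e by (auto intro!: power_mono)
    thus ?thesis using sum_bounded_below[of T "e\<^sup>2" ?f] by simp
  qed
  also have "sum ?f T \<le> I" unfolding I_def by (rule finite_sum_le_infsum[OF sf T(2)]) auto
  finally have "real N * e\<^sup>2 \<le> I" using T(3) by simp
  moreover have "I < real N * e\<^sup>2" using N e by (simp add: field_simps)
  ultimately show False by simp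
qed

lemma ell2_diff:
  assumes u: "ell2 u" and v: "ell2 v"
  shows "ell2 (\<lambda>n. u n - v n)"
  unfolding ell2_def
proof (rule summable_on_comparison_test)
  show "(\<lambda>n. 2 * (norm (u n))\<^sup>2 + 2 * (norm (v n))\<^sup>2) summable_on UNIV"
    using u v unfolding ell2_def by (intro summable_on_add summable_on_cmult_right)
  fix n :: site
  have "norm (u n - v n) \<le> norm (u n) + norm (v n)" by (rule norm_triangle_ineq4)
  hence "(norm (u n - v n))\<^sup>2 \<le> (norm (u n) + norm (v n))\<^sup>2" by (simp add: power_mono)
  also have "\<dots> \<le> 2 * (norm (u n))\<^sup>2 + 2 * (norm (v n))\<^sup>2"
    using sum_squares_bound[of "norm (u n)" "norm (v n)"] by (simp add: power2_eq_square algebra_simps)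
  finally show "(norm (u n - v n))\<^sup>2 \<le> 2 * (norm (u n))\<^sup>2 + 2 * (norm (v n))\<^sup>2" .
qed simp

lemma ell2_norm_attains_max:
  assumes "ell2 v"
  obtains m where "\<And>n. norm (v n) \<le> norm (v m)"
proof (cases "\<forall>n. v n = 0")
  case False
  then obtain n0 where n0: "v n0 \<noteq> 0" by blast
  define S where "S = {n. norm (v n0) \<le> norm (v n)}"
  have S: "finite S" "n0 \<in> S" unfolding S_def using ell2_finite_level_set[OF assms] n0 by auto
  then obtain m where m: "m \<in> S" "Max ((\<lambda>n. norm (v n)) ` S) = norm (v m)"
    using obtains_MAX[of S] by blast
  have "norm (v n) \<le> norm (v m)" for n
  proof (cases "n \<in> S")
    case True
    hence "norm (v n) \<le> Max ((\<lambda>n. norm (v n)) ` S)" using S(1) by (intro Max_ge) auto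
    thus ?thesis using m(2) by simp
  next
    case False thus ?thesis using m(1) by (auto simp: S_def)
  qed
  thus ?thesis by (rule that)
qed (use that in auto)

lemma ell2_hab_eigenfunction_eq_0:
  assumes v: "ell2 v" and eig: "\<And>n. hab a b v n = c * v n" and c: "hbound a b < norm c"
  shows "v n = 0"
proof -
  obtain m where m: "\<And>n. norm (v n) \<le> norm (v m)" using ell2_norm_attains_max[OF v] by blast
  have "norm c * norm (v m) = norm (hab a b v m)" by (simp add: eig norm_mult)
  also have "\<dots> \<le> hbound a b * norm (v m)" by (rule norm_hab_le[OF m])
  finally have "(norm c - hbound a b) * norm (v m) \<le> 0" by (simp add: algebra_simps)
  hence "norm (v m) \<le> 0" using c by (simp add: mult_le_0_iff)
  thus ?thesis using m[of n] by simp
qed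

lemma hab_diff: "hab a b (\<lambda>n. u n - v n) n = hab a b u n - hab a b v n"
  by (simp add: hab_def h0_def algebra_simps)

lemma resolvent_delta_neumann:
  assumes hw: "2 * hbound a b * norm w \<le> 1" and w0: "w \<noteq> 0"
  shows "resolvent_delta a b (1/w) j = neumann a b w j"
  unfolding resolvent_delta_def
proof (rule the_equality)
  show "ell2 (neumann a b w j) \<and> (\<forall>n. hab a b (neumann a b w j) n - (1/w) * neumann a b w j n = (if n = j then 1 else 0))"
    using ell2_neumann[OF hw] neumann_solves[OF hw w0] by (simp add: delta_def)
next
  fix u assume u: "ell2 u \<and> (\<forall>n. hab a b u n - (1/w) * u n = (if n = j then 1 else 0))"
  have "2 * hbound a b \<le> 1 / norm w" using hw w0 by (simp add: field_simps)
  hence c: "hbound a b < norm (1/w)" using hbound_ge_4[of a b] by (simp add: norm_divide)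
  have eig: "hab a b (\<lambda>n. u n - neumann a b w j n) n = (1/w) * (u n - neumann a b w j n)" for n
  proof -
    have "hab a b u n - (1/w) * u n = delta j n" using u unfolding delta_def by blast
    hence "hab a b u n = delta j n + (1/w) * u n" by (simp only: diff_eq_eq)
    moreover have "hab a b (neumann a b w j) n = delta j n + (1/w) * neumann a b w j n"
      using neumann_solves[OF hw w0, of j n] by (simp only: diff_eq_eq)
    ultimately show ?thesis by (simp add: hab_diff algebra_simps)
  qed
  have "ell2 (\<lambda>n. u n - neumann a b w j n)" using u ell2_neumann[OF hw] by (intro ell2_diff) auto
  hence "u n - neumann a b w j n = 0" for n by (rule ell2_hab_eigenfunction_eq_0[OF _ eig c])
  thus "u = neumann a b w j" by auto
qed

section \<open>The compressed resolvent\<close>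

definition corner :: "nat \<Rightarrow> site" where
  "corner p = (if p = 0 then (0,0) else if p = 1 then (1,0) else if p = 2 then (1,1) else (0,1))"

lemma corner_simps: "corner 0 = (0,0)" "corner 1 = (1,0)" "corner 2 = (1,1)" "corner 3 = (0,1)"
  by (simp_all add: corner_def)

lemma corner_eq_iff: "p < 4 \<Longrightarrow> q < 4 \<Longrightarrow> corner p = corner q \<longleftrightarrow> p = q"
  by (auto simp: corner_def less4_iff)

lemma C0_corner: "C0 = corner ` {..<4}"
proof -
  have "{..<4::nat} = {0, 1, 2, 3}" by (auto simp: less4_iff)
  thus ?thesis by (auto simp: C0_def corner_def)
qed

lemma inj_corner: "inj_on corner {..<4}" by (auto simp: inj_on_def corner_eq_iff)

lemma sum_C0_corner: "(\<Sum>j\<in>C0. f j) = (\<Sum>q<4. f (corner q))"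
  by (simp add: C0_corner sum.reindex[OF inj_corner])

lemma compressed_eigenvalues_eq_eigvals4: "compressed_eigenvalues a b z = eigvals4 (\<lambda>p q. Gmat a b z (corner p) (corner q))"
proof
  show "compressed_eigenvalues a b z \<subseteq> eigvals4 (\<lambda>p q. Gmat a b z (corner p) (corner q))"
  proof
    fix mu assume "mu \<in> compressed_eigenvalues a b z"
    then obtain v where v1: "\<exists>i\<in>C0. v i \<noteq> 0" and v2: "\<forall>i\<in>C0. (\<Sum>j\<in>C0. Gmat a b z i j * v j) = mu * v i"
      unfolding compressed_eigenvalues_def by blast
    define x where "x = (\<lambda>q. v (corner q))"
    have "\<exists>p<4. x p \<noteq> 0" using v1 unfolding C0_corner x_def by auto
    moreover have "\<forall>k<4. (\<Sum>j<4. Gmat a b z (corner k) (corner j) * x j) = mu * x k"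
    proof (intro allI impI)
      fix k :: nat assume k: "k < 4"
      have "corner k \<in> C0" using k by (simp add: C0_corner)
      thus "(\<Sum>j<4. Gmat a b z (corner k) (corner j) * x j) = mu * x k"
        using v2 unfolding x_def sum_C0_corner by simp
    qed
    ultimately show "mu \<in> eigvals4 (\<lambda>p q. Gmat a b z (corner p) (corner q))" unfolding eigvals4_def by blast
  qed
  show "eigvals4 (\<lambda>p q. Gmat a b z (corner p) (corner q)) \<subseteq> compressed_eigenvalues a b z"
  proof
    fix mu assume "mu \<in> eigvals4 (\<lambda>p q. Gmat a b z (corner p) (corner q))"
    then obtain x i where xi: "i < 4" "x i \<noteq> 0" and x2: "\<forall>k<4. (\<Sum>j<4. Gmat a b z (corner k) (corner j) * x j) = mu * x k"
      unfolding eigvals4_def by blast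
    define v where "v = (\<lambda>s. x (inv_into {..<4} corner s))"
    have vcc: "v (corner p) = x p" if "p < 4" for p
      using that by (simp add: v_def inv_into_f_f[OF inj_corner])
    have "corner i \<in> C0" using xi by (simp add: C0_corner)
    hence "\<exists>i\<in>C0. v i \<noteq> 0" by (rule bexI[rotated]) (use vcc[OF xi(1)] xi(2) in simp)
    moreover have "\<forall>i\<in>C0. (\<Sum>j\<in>C0. Gmat a b z i j * v j) = mu * v i"
    proof
      fix s assume "s \<in> C0"
      then obtain k where k: "k < 4" "s = corner k" unfolding C0_corner by auto
      have "(\<Sum>j\<in>C0. Gmat a b z s j * v j) = (\<Sum>j<4. Gmat a b z (corner k) (corner j) * x j)"
        unfolding sum_C0_corner k(2) by (intro sum.cong) (auto simp: vcc)
      also have "\<dots> = mu * x k" using x2 k by simp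
      finally show "(\<Sum>j\<in>C0. Gmat a b z s j * v j) = mu * v s" using vcc k by simp
    qed
    ultimately show "mu \<in> compressed_eigenvalues a b z" unfolding compressed_eigenvalues_def by blast
  qed
qed

lemma summable_hpow_powser:
  assumes hw: "2 * hbound a b * norm w \<le> 1"
  shows "summable (\<lambda>k. hpow a b k j n * w^k)"
proof -
  have g: "summable (\<lambda>k. 1 * (1/2::real)^k)" by (rule summable_const_half_pow)
  have bnd: "norm (hpow a b k j n * w^k) \<le> 1 * (1/2)^k" for k
  proof -
    have L0: "0 \<le> hbound a b" using hbound_ge_4[of a b] by linarith
    have "norm (hpow a b k j n * w^k) = norm (hpow a b k j n) * norm w ^ k" by (simp add: norm_mult norm_power)
    also have "\<dots> \<le> hbound a b ^ k * norm w ^ k" by (intro mult_right_mono norm_hpow_le) auto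
    also have "\<dots> = (hbound a b * norm w) ^ k" by (simp add: power_mult_distrib)
    also have "\<dots> \<le> (1/2) ^ k" by (intro power_mono) (use hw L0 in auto)
    finally show ?thesis by simp
  qed
  show ?thesis by (rule summable_comparison_test'[OF g, of 0]) (rule bnd)
qed

definition Nmat :: "real \<Rightarrow> real \<Rightarrow> complex \<Rightarrow> nat \<Rightarrow> nat \<Rightarrow> complex" where
  "Nmat a b w p q = (\<Sum>k. hpow a b (Suc k) (corner q) (corner p) * w^k)"

lemma Nmat_sums:
  assumes hw: "2 * hbound a b * norm w \<le> 1"
  shows "(\<lambda>k. hpow a b (Suc k) (corner q) (corner p) * w^k) sums Nmat a b w p q"
proof -
  have "summable (\<lambda>k. hpow a b (Suc k) (corner q) (corner p) * w^k)"
    using powser_split_head(3)[OF summable_hpow_powser[OF hw]] .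
  thus ?thesis by (simp add: Nmat_def summable_sums)
qed

lemma Gmat_corner:
  assumes hw: "2 * hbound a b * norm w \<le> 1" and w0: "w \<noteq> 0" and pq: "p < 4" "q < 4"
  shows "Gmat a b (1/w) (corner p) (corner q) = -w * ((if p = q then 1 else 0) + w * Nmat a b w p q)"
proof -
  let ?f = "\<lambda>k. hpow a b k (corner q) (corner p)"
  have sm: "summable (\<lambda>k. ?f k * w^k)" by (rule summable_hpow_powser[OF hw])
  have "Gmat a b (1/w) (corner p) (corner q) = neumann a b w (corner q) (corner p)"
    by (simp add: Gmat_def resolvent_delta_neumann[OF hw w0])
  also have "\<dots> = - (\<Sum>k. w * (?f k * w^k))" unfolding neumann_def by (simp add: mult_ac)
  also have "\<dots> = - (w * (\<Sum>k. ?f k * w^k))" by (subst suminf_mult[OF sm]) simp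
  also have "(\<Sum>k. ?f k * w^k) = ?f 0 + (\<Sum>k. ?f (Suc k) * w^k) * w"
    by (rule powser_split_head(1)[OF sm])
  also have "?f 0 = (if p = q then 1 else 0)" using corner_eq_iff[OF pq] by (auto simp: hpow_0 delta_def)
  finally show ?thesis by (simp add: Nmat_def algebra_simps)
qed

text \<open>The columns are eigenvectors of the adjacency matrix of the 4-cycle
  \<open>corner 0, \<dots>, corner 3\<close>, for the eigenvalues \<open>2, -2, 0, 0\<close>.\<close>
definition Smat :: "nat \<Rightarrow> nat \<Rightarrow> complex" where
  "Smat i p = (if i < 4 \<and> p < 4 then of_int ([[1,1,1,0],[1,-1,0,1],[1,1,-1,0],[1,-1,0,-1]] ! i ! p) else 0)"

definition Sinv :: "nat \<Rightarrow> nat \<Rightarrow> complex" where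
  "Sinv p i = (if p < 2 then 1/4 else 1/2) * Smat i p"

lemma Sinv_Smat: "p < 4 \<Longrightarrow> q < 4 \<Longrightarrow> (\<Sum>i<4. Sinv p i * Smat i q) = (if p = q then 1 else 0)"
  by (auto simp: less4_iff sum_lessThan4 Sinv_def Smat_def)

lemma Smat_Sinv: "p < 4 \<Longrightarrow> q < 4 \<Longrightarrow> (\<Sum>i<4. Smat p i * Sinv i q) = (if p = q then 1 else 0)"
  by (auto simp: less4_iff sum_lessThan4 Sinv_def Smat_def)

lemma Smat_vals: "Smat 0 0 = 1" "Smat 0 1 = 1" "Smat 0 2 = 1" "Smat 0 3 = 0" "Smat 1 0 = 1" "Smat 1 1 = -1" "Smat 1 2 = 0" "Smat 1 3 = 1" "Smat 2 0 = 1" "Smat 2 1 = 1" "Smat 2 2 = -1" "Smat 2 3 = 0" "Smat 3 0 = 1" "Smat 3 1 = -1" "Smat 3 2 = 0" "Smat 3 3 = -1"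
  by (simp_all add: Smat_def)

lemma Sinv_vals: "Sinv 0 0 = 1/4" "Sinv 0 1 = 1/4" "Sinv 0 2 = 1/4" "Sinv 0 3 = 1/4" "Sinv 1 0 = 1/4" "Sinv 1 1 = -1/4" "Sinv 1 2 = 1/4" "Sinv 1 3 = -1/4" "Sinv 2 0 = 1/2" "Sinv 2 1 = 0" "Sinv 2 2 = -1/2" "Sinv 2 3 = 0" "Sinv 3 0 = 0" "Sinv 3 1 = 1/2" "Sinv 3 2 = 0" "Sinv 3 3 = -1/2"
  by (simp_all add: Sinv_def Smat_def)

lemma norm_Smat_le: "norm (Smat i p) \<le> 1"
proof (cases "i < 4 \<and> p < 4")
  case True
  hence "i \<in> {0,1,2,3}" "p \<in> {0,1,2,3}" by auto
  thus ?thesis by (auto simp: Smat_def)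
qed (auto simp: Smat_def)

lemma norm_Sinv_le: "norm (Sinv p i) \<le> 1/2"
proof -
  have "norm (Sinv p i) \<le> 1/2 * norm (Smat i p)"
    unfolding Sinv_def by (auto simp: norm_mult norm_divide)
  also have "\<dots> \<le> 1/2" using norm_Smat_le[of i p] by simp
  finally show ?thesis .
qed

text \<open>Subtracting this scalar series makes the diagonal of the lower \<open>2 \<times> 2\<close> block of \<open>Kmat\<close>
  vanish to order \<open>w^4\<close>.\<close>
definition shift_coeff :: "real \<Rightarrow> real \<Rightarrow> nat \<Rightarrow> complex" where
  "shift_coeff a b k = of_real (if k = 1 then 2 else if k = 2 then (a + b) / 2
                                else if k = 3 then 12 + (a^2 + b^2) / 2 else 0)"

definition shift :: "real \<Rightarrow> real \<Rightarrow> complex \<Rightarrow> complex" where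
  "shift a b w = (\<Sum>k<4. shift_coeff a b k * w^k)"

lemma shift_coeff_vals: "shift_coeff a b 0 = 0" "shift_coeff a b 1 = 2" "shift_coeff a b 2 = (of_real a + of_real b) / 2"
   "shift_coeff a b 3 = 12 + ((of_real a)^2 + (of_real b)^2) / 2" by (simp_all add: shift_coeff_def)

definition shift_bound :: "real \<Rightarrow> real \<Rightarrow> real" where "shift_bound a b = 14 + \<bar>a\<bar> + \<bar>b\<bar> + a^2 + b^2"

lemma norm_shift_coeff_le: "norm (shift_coeff a b k) \<le> shift_bound a b"
proof -
  have sq: "0 \<le> a^2" "0 \<le> b^2" by simp_all
  have "\<bar>(a + b) / 2\<bar> = \<bar>a + b\<bar> / 2" by simp
  hence "\<bar>(a + b) / 2\<bar> \<le> shift_bound a b"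
    using sq abs_triangle_ineq[of a b] abs_ge_zero[of a] abs_ge_zero[of b] unfolding shift_bound_def by linarith
  moreover have "2 \<le> shift_bound a b" "0 \<le> shift_bound a b" "\<bar>12 + (a^2 + b^2) / 2\<bar> \<le> shift_bound a b"
    using sq by (simp_all add: shift_bound_def)
  ultimately show ?thesis unfolding shift_coeff_def norm_of_real by auto
qed

definition kcoeff :: "real \<Rightarrow> real \<Rightarrow> nat \<Rightarrow> nat \<Rightarrow> nat \<Rightarrow> complex" where
  "kcoeff a b p q k = (\<Sum>i<4. \<Sum>j<4. Sinv p i * hpow a b (Suc k) (corner j) (corner i) * Smat j q)
                   - (if p = q then shift_coeff a b k else 0)"

definition Kmat :: "real \<Rightarrow> real \<Rightarrow> complex \<Rightarrow> nat \<Rightarrow> nat \<Rightarrow> complex" where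
  "Kmat a b w p q = (\<Sum>i<4. \<Sum>j<4. Sinv p i * Nmat a b w i j * Smat j q) - (if p = q then shift a b w else 0)"

lemma Kmat_sums:
  assumes hw: "2 * hbound a b * norm w \<le> 1"
  shows "(\<lambda>k. kcoeff a b p q k * w^k) sums Kmat a b w p q"
proof -
  have 1: "(\<lambda>k. \<Sum>i<4. \<Sum>j<4. Sinv p i * (hpow a b (Suc k) (corner j) (corner i) * w^k) * Smat j q)
      sums (\<Sum>i<4. \<Sum>j<4. Sinv p i * Nmat a b w i j * Smat j q)"
    by (intro sums_sum) (rule sums_mult2, rule sums_mult, rule Nmat_sums[OF hw])
  have 2: "(\<lambda>k. (if p = q then shift_coeff a b k else 0) * w^k) sums (if p = q then shift a b w else 0)"
  proof (cases "p = q")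
    case True
    have "(\<lambda>k. shift_coeff a b k * w^k) sums (\<Sum>k<4. shift_coeff a b k * w^k)"
      by (rule sums_finite) (auto simp: shift_coeff_def)
    thus ?thesis using True by (simp add: shift_def)
  qed simp
  have eq: "\<And>k. kcoeff a b p q k * w^k = (\<Sum>i<4. \<Sum>j<4. Sinv p i * (hpow a b (Suc k) (corner j) (corner i) * w^k) * Smat j q)
      - (if p = q then shift_coeff a b k else 0) * w^k"
    unfolding kcoeff_def by (simp add: sum_distrib_left sum_distrib_right right_diff_distrib left_diff_distrib mult_ac)
  show ?thesis unfolding eq Kmat_def by (rule sums_diff[OF 1 2])
qed

lemma hpow_numerals: "hpow a b (Suc 0) = hpow a b 1" "hpow a b (Suc 1) = hpow a b 2" "hpow a b (Suc 2) = hpow a b 3" "hpow a b (Suc 3) = hpow a b 4"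
  by (simp_all add: eval_nat_numeral)

lemma kcoeff_low:
  fixes a b :: real
  defines "A \<equiv> complex_of_real a" and "B \<equiv> complex_of_real b"
  shows
  "kcoeff a b 0 0 0 = 2"
  "kcoeff a b 0 1 0 = 0"
  "kcoeff a b 0 2 0 = 0"
  "kcoeff a b 0 3 0 = 0"
  "kcoeff a b 1 0 0 = 0"
  "kcoeff a b 1 1 0 = - 2"
  "kcoeff a b 1 2 0 = 0"
  "kcoeff a b 1 3 0 = 0"
  "kcoeff a b 2 0 0 = 0"
  "kcoeff a b 2 1 0 = 0"
  "kcoeff a b 2 2 0 = 0"
  "kcoeff a b 2 3 0 = 0"
  "kcoeff a b 3 0 0 = 0"
  "kcoeff a b 3 1 0 = 0"
  "kcoeff a b 3 2 0 = 0"
  "kcoeff a b 3 3 0 = 0"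
  "kcoeff a b 0 2 1 = 0"
  "kcoeff a b 0 3 1 = 0"
  "kcoeff a b 1 2 1 = 0"
  "kcoeff a b 1 3 1 = 0"
  "kcoeff a b 2 0 1 = 0"
  "kcoeff a b 2 1 1 = 0"
  "kcoeff a b 2 2 1 = 0"
  "kcoeff a b 2 3 1 = 0"
  "kcoeff a b 3 0 1 = 0"
  "kcoeff a b 3 1 1 = 0"
  "kcoeff a b 3 2 1 = 0"
  "kcoeff a b 3 3 1 = 0"
  "kcoeff a b 2 2 2 = 0"
  "kcoeff a b 2 3 2 = 0"
  "kcoeff a b 3 2 2 = 0"
  "kcoeff a b 3 3 2 = 0"
  "kcoeff a b 2 2 3 = 0"
  "kcoeff a b 2 3 3 = - B + A"
  "kcoeff a b 3 2 3 = - B + A"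
  "kcoeff a b 3 3 3 = 0"
  unfolding kcoeff_def sum_lessThan4 A_def B_def
  apply (simp_all only: Smat_vals Sinv_vals corner_simps hpow_numerals shift_coeff_vals hpow_C0)
  apply (simp_all add: algebra_simps)
  apply (simp_all add: field_simps)
  done

lemma norm_double_sum4_le:
  assumes "\<And>i j. norm (f i j) \<le> M"
  shows "norm (\<Sum>i<4::nat. \<Sum>j<4::nat. f i j :: complex) \<le> 16 * M"
proof -
  have "norm (\<Sum>i<4::nat. \<Sum>j<4::nat. f i j) \<le> (\<Sum>i<4::nat. norm (\<Sum>j<4::nat. f i j))" by (rule norm_sum)
  also have "\<dots> \<le> (\<Sum>i<4::nat. \<Sum>j<4::nat. norm (f i j))" by (intro sum_mono norm_sum)
  also have "\<dots> \<le> (\<Sum>i<4::nat. \<Sum>j<4::nat. M)" by (intro sum_mono assms)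
  also have "\<dots> = 16 * M" by simp
  finally show ?thesis .
qed

lemma norm_kcoeff_le: "norm (kcoeff a b p q k) \<le> 8 * hbound a b ^ Suc k + shift_bound a b"
proof -
  have "norm (\<Sum>i<4. \<Sum>j<4. Sinv p i * hpow a b (Suc k) (corner j) (corner i) * Smat j q) \<le> 16 * (1/2 * hbound a b ^ Suc k * 1)"
  proof (rule norm_double_sum4_le)
    fix i j
    show "norm (Sinv p i * hpow a b (Suc k) (corner j) (corner i) * Smat j q) \<le> 1/2 * hbound a b ^ Suc k * 1"
      unfolding norm_mult using hbound_ge_4[of a b]
      by (intro mult_mono norm_Sinv_le norm_hpow_le norm_Smat_le) (auto intro: mult_nonneg_nonneg zero_le_power)
  qed
  hence 1: "norm (\<Sum>i<4. \<Sum>j<4. Sinv p i * hpow a b (Suc k) (corner j) (corner i) * Smat j q) \<le> 8 * hbound a b ^ Suc k" by simp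
  have 2: "norm (if p = q then shift_coeff a b k else 0) \<le> shift_bound a b"
    using norm_shift_coeff_le[of a b k] by (auto simp: shift_bound_def)
  show ?thesis unfolding kcoeff_def by (rule order_trans[OF norm_triangle_ineq4 add_mono[OF 1 2]])
qed

definition kval :: "nat \<Rightarrow> nat \<Rightarrow> nat" where
  "kval p q = (if p < 2 \<and> q < 2 then 1 else if 2 \<le> p \<and> 2 \<le> q then 4 else 2)"

definition Pmat :: "real \<Rightarrow> real \<Rightarrow> complex \<Rightarrow> nat \<Rightarrow> nat \<Rightarrow> complex" where
  "Pmat a b w p q = (\<Sum>k. kcoeff a b p q (k + kval p q) * w^k)"

lemma summable_kcoeff_shift:
  assumes hw: "2 * hbound a b * norm w \<le> 1"
  shows "summable (\<lambda>k. kcoeff a b p q (k + e) * w^k)"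
proof (rule summable_comparison_test'[of "\<lambda>k. (8 * hbound a b ^ Suc e + shift_bound a b) * (1/2::real)^k" 0])
  show "summable (\<lambda>k. (8 * hbound a b ^ Suc e + shift_bound a b) * (1/2::real)^k)" by (rule summable_const_half_pow)
  fix k :: nat
  have L0: "0 \<le> hbound a b" "1 \<le> hbound a b" using hbound_ge_4[of a b] by linarith+
  have Cs0: "0 \<le> shift_bound a b" by (simp add: shift_bound_def)
  have "8 * norm w \<le> 2 * hbound a b * norm w" using hbound_ge_4[of a b] by (intro mult_right_mono) auto
  hence w2: "norm w \<le> 1/2" using hw by linarith
  have Lw: "hbound a b * norm w \<le> 1/2" using hw by linarith
  have "norm (kcoeff a b p q (k + e) * w^k) = norm (kcoeff a b p q (k + e)) * norm w ^ k"
    by (simp add: norm_mult norm_power)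
  also have "\<dots> \<le> (8 * hbound a b ^ Suc (k + e) + shift_bound a b) * norm w ^ k"
    by (intro mult_right_mono norm_kcoeff_le) auto
  also have "\<dots> = 8 * hbound a b ^ Suc e * (hbound a b * norm w) ^ k + shift_bound a b * norm w ^ k"
    by (simp add: algebra_simps power_add power_mult_distrib)
  also have "\<dots> \<le> 8 * hbound a b ^ Suc e * (1/2) ^ k + shift_bound a b * (1/2) ^ k"
    by (intro add_mono mult_left_mono power_mono) (use Lw w2 L0 Cs0 in auto)
  also have "\<dots> = (8 * hbound a b ^ Suc e + shift_bound a b) * (1/2::real)^k" by (simp add: algebra_simps)
  finally show "norm (kcoeff a b p q (k + e) * w^k) \<le> (8 * hbound a b ^ Suc e + shift_bound a b) * (1/2::real)^k" .
qed

lemma Kmat_split: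
  assumes hw: "2 * hbound a b * norm w \<le> 1"
  shows "Kmat a b w p q = (\<Sum>k<kval p q. kcoeff a b p q k * w^k) + w^(kval p q) * Pmat a b w p q"
proof -
  let ?e = "kval p q"
  have "(\<lambda>k. kcoeff a b p q k * w^k) sums Kmat a b w p q" by (rule Kmat_sums[OF hw])
  hence 1: "(\<lambda>i. kcoeff a b p q (i + ?e) * w^(i + ?e)) sums (Kmat a b w p q - (\<Sum>k<?e. kcoeff a b p q k * w^k))"
    using sums_iff_shift[of "\<lambda>k. kcoeff a b p q k * w^k" ?e] by (simp add: algebra_simps)
  have "(\<lambda>i. kcoeff a b p q (i + ?e) * w^i) sums Pmat a b w p q"
    unfolding Pmat_def by (rule summable_sums[OF summable_kcoeff_shift[OF hw]])
  hence "(\<lambda>i. (kcoeff a b p q (i + ?e) * w^i) * w^?e) sums (Pmat a b w p q * w^?e)" by (rule sums_mult2)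
  hence 2: "(\<lambda>i. kcoeff a b p q (i + ?e) * w^(i + ?e)) sums (w^?e * Pmat a b w p q)"
    by (simp add: power_add mult_ac)
  from sums_unique2[OF 1 2] show ?thesis by (simp add: algebra_simps)
qed

lemma isCont_Pmat: "isCont (\<lambda>w. Pmat a b w p q) 0"
proof -
  define K0 :: complex where "K0 = of_real (1 / (2 * hbound a b))"
  have Lp: "0 < hbound a b" using hbound_ge_4[of a b] by linarith
  have nK: "norm K0 = 1 / (2 * hbound a b)" unfolding K0_def norm_of_real using Lp by simp
  have "2 * hbound a b * norm K0 \<le> 1" using Lp by (simp add: nK)
  hence "summable (\<lambda>k. kcoeff a b p q (k + kval p q) * K0^k)" by (rule summable_kcoeff_shift)
  moreover have "norm (0::complex) < norm K0" using Lp by (simp add: nK)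
  ultimately show ?thesis unfolding Pmat_def by (rule isCont_powser)
qed

lemma kval_vals: "kval 0 0 = 1" "kval 0 1 = 1" "kval 0 2 = 2" "kval 0 3 = 2" "kval 1 0 = 1" "kval 1 1 = 1" "kval 1 2 = 2" "kval 1 3 = 2" "kval 2 0 = 2" "kval 2 1 = 2" "kval 2 2 = 4" "kval 2 3 = 4" "kval 3 0 = 2" "kval 3 1 = 2" "kval 3 2 = 4" "kval 3 3 = 4"
  by (simp_all add: kval_def)

lemma Kmat_eq_Kshape:
  assumes hw: "2 * hbound a b * norm w \<le> 1" and pq: "p < 4" "q < 4"
  shows "Kmat a b w p q = Kshape w (of_real a - of_real b) (Pmat a b w) p q"
  using pq(1)
proof (rule less4_cases)
  note sp = Kmat_split[OF hw]
  note kl = kcoeff_low[of a b]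
  show "Kmat a b w 0 q = Kshape w (of_real a - of_real b) (Pmat a b w) 0 q" using pq(2)
    by (rule less4_cases) (simp only: sp kl kval_vals Kshape_simps sum_lessThan1 sum_lessThan2 sum_lessThan4, simp)+
  show "Kmat a b w 1 q = Kshape w (of_real a - of_real b) (Pmat a b w) 1 q" using pq(2)
    by (rule less4_cases) (simp only: sp kl kval_vals Kshape_simps sum_lessThan1 sum_lessThan2 sum_lessThan4, simp)+
  show "Kmat a b w 2 q = Kshape w (of_real a - of_real b) (Pmat a b w) 2 q" using pq(2)
    by (rule less4_cases) (simp only: sp kl kval_vals Kshape_simps sum_lessThan1 sum_lessThan2 sum_lessThan4, simp add: algebra_simps)+
  show "Kmat a b w 3 q = Kshape w (of_real a - of_real b) (Pmat a b w) 3 q" using pq(2)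
    by (rule less4_cases) (simp only: sp kl kval_vals Kshape_simps sum_lessThan1 sum_lessThan2 sum_lessThan4, simp add: algebra_simps)+
qed

lemma compressed_eigenvalues_Kshape:
  assumes hw: "2 * hbound a b * norm w \<le> 1" and w0: "w \<noteq> 0"
  shows "compressed_eigenvalues a b (1/w)
    = (\<lambda>x. - w - w^2 * (x + shift a b w)) ` eigvals4 (Kshape w (of_real a - of_real b) (Pmat a b w))"
proof -
  have "compressed_eigenvalues a b (1/w) = (\<lambda>nu. - w + - (w^2) * nu) ` eigvals4 (Nmat a b w)"
    unfolding compressed_eigenvalues_eq_eigvals4
  proof (rule eigvals4_affine)
    show "- (w^2) \<noteq> 0" using w0 by simp
  qed (simp add: Gmat_corner[OF hw w0] algebra_simps power2_eq_square)
  also have "eigvals4 (Nmat a b w) = (\<lambda>x. x + shift a b w) ` eigvals4 (Kmat a b w)"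
  proof -
    let ?SNS = "\<lambda>p q. \<Sum>i<4. \<Sum>j<4. Sinv p i * Nmat a b w i j * Smat j q"
    have "eigvals4 ?SNS = eigvals4 (Nmat a b w)"
      by (rule eigvals4_conj) (simp_all add: Sinv_Smat Smat_Sinv)
    moreover have "eigvals4 (Kmat a b w) = (\<lambda>x. - shift a b w + 1 * x) ` eigvals4 ?SNS"
      by (rule eigvals4_affine) (simp_all add: Kmat_def)
    ultimately show ?thesis by (simp add: image_image)
  qed
  also have "eigvals4 (Kmat a b w) = eigvals4 (Kshape w (of_real a - of_real b) (Pmat a b w))"
    by (rule eigvals4_cong) (simp add: Kmat_eq_Kshape[OF hw])
  finally show ?thesis by (simp add: image_image algebra_simps)
qed

definition disc_quot :: "real \<Rightarrow> real \<Rightarrow> complex \<Rightarrow> complex" where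
  "disc_quot a b w = (let d = of_real a - of_real b; P = Pmat a b w in
     16384 * d^2 + w * disc_rest w d (beta1 w P) (beta2 w d P) (beta3 w d P) (beta4 w d P))"

lemma card_compressed_eigenvalues:
  assumes hw: "2 * hbound a b * norm w \<le> 1" and w0: "w \<noteq> 0" and disc: "disc_quot a b w \<noteq> 0"
  shows "card (compressed_eigenvalues a b (1/w)) = 4"
proof -
  let ?K = "Kshape w (of_real a - of_real b) (Pmat a b w)"
  have "quartic_disc (char_coeff3 ?K) (char_coeff2 ?K) (char_coeff1 ?K) (char_coeff0 ?K) = w^6 * disc_quot a b w"
    unfolding quartic_disc_Kshape by (simp add: disc_quot_def Let_def)
  hence "card (eigvals4 ?K) = 4" using w0 disc by (intro card_eigvals4) simp
  moreover have "inj (\<lambda>x. - w - w^2 * (x + shift a b w))" using w0 by (auto intro!: injI)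
  ultimately show ?thesis
    unfolding compressed_eigenvalues_Kshape[OF hw w0] by (simp add: card_image inj_on_subset)
qed

lemma disc_quot_nonzero_near_0:
  assumes "a \<noteq> b"
  obtains s where "s > 0" and "\<And>w. norm w < s \<Longrightarrow> disc_quot a b w \<noteq> 0"
proof -
  have "isCont (disc_quot a b) 0"
    unfolding disc_quot_def Let_def disc_rest_def beta1_def beta2_def beta3_def beta4_def
    by (intro continuous_intros isCont_Pmat)
  moreover have "disc_quot a b 0 \<noteq> 0" using assms by (simp add: disc_quot_def)
  ultimately obtain s where "s > 0" "\<forall>w. dist 0 w < s \<longrightarrow> disc_quot a b w \<noteq> 0"
    using continuous_at_avoid[of 0 "disc_quot a b" 0] by blast
  then show ?thesis using that by (simp add: dist_norm)
qed

theorem proposition6p2: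
  fixes a b :: real
  assumes "a \<noteq> b"
  shows "\<exists>R>0. \<forall>z::complex. Im z \<noteq> 0 \<and> norm z > R \<longrightarrow>
           card (compressed_eigenvalues a b z) = 4"
proof -
  obtain s where s: "s > 0" and disc: "\<And>w. norm w < s \<Longrightarrow> disc_quot a b w \<noteq> 0"
    using disc_quot_nonzero_near_0[OF assms] by blast
  define R where "R = max (2 * hbound a b) (1 / s)"
  have R: "R > 0" using hbound_ge_4[of a b] by (simp add: R_def)
  have "card (compressed_eigenvalues a b z) = 4" if "norm z > R" for z :: complex
  proof -
    have z0: "z \<noteq> 0" using that R by auto
    have "2 * hbound a b * norm (1/z) \<le> 1" and "norm (1/z) < s"
      using that z0 s by (simp_all add: R_def norm_divide field_simps)
    with z0 show ?thesis
      using card_compressed_eigenvalues[of a b "1/z"] disc[of "1/z"] by simp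
  qed
  with R show ?thesis by blast
qed

end
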